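(* Let $\mathcal Z\subseteq\mathbb R^n$ be a real algebraic variety endowed with $\mathscr L^2$-mollifiers $\{\phi_{z,\epsilon}\}$, $\epsilon\in\mathcal E$, with respect to a reference measure $\lambda$. Let $\mu$ be a finite Borel measure on $\mathcal Z$ whose support $X$ is compact, has nonempty Euclidean interior relative to $\mathcal Z$, and is Zariski dense in $\mathcal Z$, and assume $\mu$ has a continuous, strictly positive density $f$ with respect to $\lambda$ on $X$. Then $$\lim_{\epsilon\to0,\ \epsilon\in\mathcal E}\left(\lim_{d\to\infty}\frac{DMCD^\mu_{d,\epsilon}(x,x)}{\|\phi_{x,\epsilon}\|^2_{\mathscr L^2(\lambda)}}\right)=\begin{cases}1/f(x), & x\in X^\circ,\\ 0, & x\in\mathcal Z\setminus X,\end{cases}$$ where $X^\circ$ is the interior of $X$ relative to $\mathcal Z$.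
   Context: A real algebraic variety is the common real zero set of finitely many real polynomials. $\mathcal Z$ with Borel measure $\lambda$ is endowed with $\mathscr L^2$-mollifiers if there is $\mathcal E\subseteq(0,\infty)$ with $0\in\overline{\mathcal E}$ and functions $\phi_{z,\epsilon}:\mathcal Z\to\mathbb R$ such that: (i) $\phi_{z,\epsilon}\ge0$, $\int_{\mathcal Z}\phi_{z,\epsilon}d\lambda=1$; (ii) for each $\epsilon$ there are $0<c_\epsilon<C_\epsilon$ with $c_\epsilon<\|\phi_{z,\epsilon}\|_{\mathscr L^2(\lambda)}<C_\epsilon$ for all $z$; (iii) $\int\phi_{z,\epsilon}p\,d\lambda\to p(z)$ as $\epsilon\to0$ for continuous $p$; (iv) for every $\delta>0$, $\int_{\mathcal Z\cap\{|y-z|>\delta\}}\phi_{z,\epsilon}^2d\lambda/\|\phi_{z,\epsilon}\|^2_{\mathscr L^2(\lambda)}\to0$ as $\epsilon\to0$. Zariski dense: every polynomial vanishing on $X$ vanishes on $\mathcal Z$. $d\mu=f\,d\lambda$ on $X$. $V_d$ is the space of restrictions to $\mathcal Z$ of real polynomials of degree $\le d$. For $z\in\mathcal Z$, let $\varphi_z\in V_d$ be the unique element with $\int_X\phi_{z,\epsilon}p\,d\lambda=\int_X\varphi_z p\,d\mu$ for all $p\in V_d$; the density-estimator MCD kernel is $DMCD^\mu_{d,\epsilon}(x,y):=\langle\varphi_x,\varphi_y\rangle_{\mathscr L^2(\mu)}$. *)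

theory Defs
  imports "HOL-Analysis.Analysis"
begin

definition poly_deg :: "nat \<Rightarrow> (real^'n \<Rightarrow> real) \<Rightarrow> bool" where
  "poly_deg d p \<longleftrightarrow> (\<exists>c :: ('n \<Rightarrow> nat) \<Rightarrow> real.
     p = (\<lambda>x. \<Sum>\<alpha>\<in>{\<alpha>::'n \<Rightarrow> nat. sum \<alpha> UNIV \<le> d}. c \<alpha> * (\<Prod>i\<in>UNIV. (x $ i) ^ (\<alpha> i))))"

definition polynomial_fun :: "(real^'n \<Rightarrow> real) \<Rightarrow> bool" where
  "polynomial_fun p \<longleftrightarrow> (\<exists>d. poly_deg d p)"

definition real_alg_variety :: "(real^'n) set \<Rightarrow> bool" where
  "real_alg_variety Z \<longleftrightarrow> (\<exists>P. finite P \<and> (\<forall>p\<in>P. polynomial_fun p) \<and> Z = {x. \<forall>p\<in>P. p x = 0})"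

definition zariski_dense :: "(real^'n) set \<Rightarrow> (real^'n) set \<Rightarrow> bool" where
  "zariski_dense X Z \<longleftrightarrow> (\<forall>p. polynomial_fun p \<longrightarrow> (\<forall>x\<in>X. p x = 0) \<longrightarrow> (\<forall>x\<in>Z. p x = 0))"

definition Vd :: "nat \<Rightarrow> (real^'n) set \<Rightarrow> (real^'n \<Rightarrow> real) set" where
  "Vd d Z = {(\<lambda>y. if y \<in> Z then q y else 0) | q. poly_deg d q}"

definition msupp :: "(real^'n) measure \<Rightarrow> (real^'n) set" where
  "msupp M = {x. \<forall>U. open U \<longrightarrow> x \<in> U \<longrightarrow> emeasure M U \<noteq> 0}"

definition L2norm :: "(real^'n) measure \<Rightarrow> (real^'n \<Rightarrow> real) \<Rightarrow> real" where
  "L2norm M g = sqrt (\<integral>y. (g y)^2 \<partial>M)"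

text \<open>L^2-mollifiers on Z w.r.t. lam (lam is concentrated on Z, so integrals over Z
  are integrals w.r.t. lam). phi z eps y stands for phi_{z,eps}(y).\<close>
definition L2_mollifiers ::
  "(real^'n) set \<Rightarrow> (real^'n) measure \<Rightarrow> real set \<Rightarrow> (real^'n \<Rightarrow> real \<Rightarrow> real^'n \<Rightarrow> real) \<Rightarrow> bool" where
  "L2_mollifiers Z lam E \<phi> \<longleftrightarrow>
     E \<subseteq> {0<..} \<and> 0 \<in> closure E \<and>
     (\<forall>z\<in>Z. \<forall>\<epsilon>\<in>E. (\<forall>y\<in>Z. \<phi> z \<epsilon> y \<ge> 0) \<and> \<phi> z \<epsilon> \<in> borel_measurable lam \<and>
        integrable lam (\<phi> z \<epsilon>) \<and> (\<integral>y. \<phi> z \<epsilon> y \<partial>lam) = 1 \<and>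
        integrable lam (\<lambda>y. (\<phi> z \<epsilon> y)^2)) \<and>
     (\<forall>\<epsilon>\<in>E. \<exists>c C. 0 < c \<and> c < C \<and>
        (\<forall>z\<in>Z. c < L2norm lam (\<phi> z \<epsilon>) \<and> L2norm lam (\<phi> z \<epsilon>) < C)) \<and>
     (\<forall>p z. continuous_on Z p \<longrightarrow> z \<in> Z \<longrightarrow>
        (\<forall>\<epsilon>\<in>E. integrable lam (\<lambda>y. \<phi> z \<epsilon> y * p y)) \<longrightarrow>
        ((\<lambda>\<epsilon>. \<integral>y. \<phi> z \<epsilon> y * p y \<partial>lam) \<longlongrightarrow> p z) (at 0 within E)) \<and>
     (\<forall>\<delta>>0. \<forall>z\<in>Z.
        ((\<lambda>\<epsilon>. (LINT y:{y. norm (y - z) > \<delta>}|lam. (\<phi> z \<epsilon> y)^2) / (L2norm lam (\<phi> z \<epsilon>))^2)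
          \<longlongrightarrow> 0) (at 0 within E))"

definition dens_rep ::
  "(real^'n) set \<Rightarrow> (real^'n) set \<Rightarrow> (real^'n) measure \<Rightarrow> (real^'n) measure \<Rightarrow>
   (real^'n \<Rightarrow> real \<Rightarrow> real^'n \<Rightarrow> real) \<Rightarrow> nat \<Rightarrow> real \<Rightarrow> real^'n \<Rightarrow> (real^'n \<Rightarrow> real)" where
  "dens_rep Z X lam mu \<phi> d \<epsilon> z =
     (THE g. g \<in> Vd d Z \<and>
        (\<forall>p\<in>Vd d Z. (LINT y:X|lam. \<phi> z \<epsilon> y * p y) = (LINT y:X|mu. g y * p y)))"

definition DMCD ::
  "(real^'n) set \<Rightarrow> (real^'n) set \<Rightarrow> (real^'n) measure \<Rightarrow> (real^'n) measure \<Rightarrow>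
   (real^'n \<Rightarrow> real \<Rightarrow> real^'n \<Rightarrow> real) \<Rightarrow> nat \<Rightarrow> real \<Rightarrow> real^'n \<Rightarrow> real^'n \<Rightarrow> real" where
  "DMCD Z X lam mu \<phi> d \<epsilon> x y =
     (\<integral>t. dens_rep Z X lam mu \<phi> d \<epsilon> x t * dens_rep Z X lam mu \<phi> d \<epsilon> y t \<partial>mu)"

end

theory Submission
  imports Defs
begin

(* Fix \<epsilon> and put h = \<phi>_{x,\<epsilon>} / f, extended by 0 off X. The identities defining the density
   representer say exactly that h minus the representer is L^2(\<mu>)-orthogonal to V_d, so the
   representer is the orthogonal projection of h onto V_d; it is unique because, by Zariski density,
   a polynomial vanishing \<mu>-almost everywhere vanishes on Z. Hence DMCD(x,x) is the squared norm of
   this projection. As \<mu> is finite with compact support, polynomials are dense in L^2(\<mu>)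
   (continuous functions are dense, then Stone-Weierstrass), so the projections converge to h and
   DMCD(x,x) tends to the integral of \<phi>^2 / f over X. Finally, 1 / f extended by 0 is bounded and
   continuous along Z at every interior point of X and at every point outside X, and \<phi>^2 / ||\<phi>||^2
   concentrates at x, so the normalised integrals tend to its value at x. *)

section \<open>Polynomial functions\<close>

definition monomial_fun :: "('n \<Rightarrow> nat) \<Rightarrow> real^'n \<Rightarrow> real" where
  "monomial_fun \<alpha> x = (\<Prod>i\<in>UNIV. (x $ i) ^ (\<alpha> i))"

definition multi_indices :: "nat \<Rightarrow> ('n::finite \<Rightarrow> nat) set" where
  "multi_indices d = {\<alpha>. sum \<alpha> UNIV \<le> d}"

lemma finite_multi_indices: "finite (multi_indices d :: ('n::finite \<Rightarrow> nat) set)"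
proof (rule finite_subset)
  show "multi_indices d \<subseteq> PiE (UNIV :: 'n set) (\<lambda>_. {0..d})"
  proof
    fix \<alpha> :: "'n \<Rightarrow> nat" assume "\<alpha> \<in> multi_indices d"
    then have "\<alpha> i \<le> d" for i using member_le_sum[of i UNIV \<alpha>] by (auto simp: multi_indices_def)
    then show "\<alpha> \<in> PiE UNIV (\<lambda>_. {0..d})" by (auto simp: PiE_iff)
  qed
qed (intro finite_PiE; simp)

lemma poly_deg_iff: "poly_deg d p \<longleftrightarrow> (\<exists>c. p = (\<lambda>x. \<Sum>\<alpha>\<in>multi_indices d. c \<alpha> * monomial_fun \<alpha> x))"
  by (simp add: poly_deg_def multi_indices_def monomial_fun_def)

lemma poly_deg_add:
  assumes "poly_deg d p" "poly_deg d q" shows "poly_deg d (\<lambda>x. p x + q x)"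
proof -
  from assms obtain c c' where "p = (\<lambda>x. \<Sum>\<alpha>\<in>multi_indices d. c \<alpha> * monomial_fun \<alpha> x)"
    and "q = (\<lambda>x. \<Sum>\<alpha>\<in>multi_indices d. c' \<alpha> * monomial_fun \<alpha> x)"
    by (auto simp: poly_deg_iff)
  then show ?thesis unfolding poly_deg_iff
    by (intro exI[of _ "\<lambda>\<alpha>. c \<alpha> + c' \<alpha>"]) (auto simp: sum.distrib distrib_right)
qed

lemma poly_deg_scale:
  assumes "poly_deg d p" shows "poly_deg d (\<lambda>x. a * p x)"
proof -
  from assms obtain c where "p = (\<lambda>x. \<Sum>\<alpha>\<in>multi_indices d. c \<alpha> * monomial_fun \<alpha> x)"
    by (auto simp: poly_deg_iff)
  then show ?thesis unfolding poly_deg_iff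
    by (intro exI[of _ "\<lambda>\<alpha>. a * c \<alpha>"]) (auto simp: sum_distrib_left mult.assoc)
qed

lemma poly_deg_monomial_fun:
  assumes "sum \<alpha> UNIV \<le> d" shows "poly_deg d (monomial_fun \<alpha>)"
  unfolding poly_deg_iff
proof (intro exI[of _ "\<lambda>\<beta>. if \<beta> = \<alpha> then 1 else 0"] ext)
  fix x
  have "\<alpha> \<in> multi_indices d" using assms by (simp add: multi_indices_def)
  have "(\<Sum>\<beta>\<in>multi_indices d. (if \<beta> = \<alpha> then 1 else 0) * monomial_fun \<beta> x)
      = (\<Sum>\<beta>\<in>multi_indices d. if \<beta> = \<alpha> then monomial_fun \<alpha> x else 0)"
    by (rule sum.cong) auto
  also have "\<dots> = monomial_fun \<alpha> x"
    using \<open>\<alpha> \<in> multi_indices d\<close> by (simp add: finite_multi_indices)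
  finally show "monomial_fun \<alpha> x = (\<Sum>\<beta>\<in>multi_indices d. (if \<beta> = \<alpha> then 1 else 0) * monomial_fun \<beta> x)"
    by simp
qed

lemma poly_deg_const: "poly_deg d (\<lambda>x. a)"
  using poly_deg_scale[OF poly_deg_monomial_fun[of "\<lambda>_. 0"], of d a] by (simp add: monomial_fun_def)

lemma poly_deg_sum:
  "finite I \<Longrightarrow> (\<And>i. i \<in> I \<Longrightarrow> poly_deg d (g i)) \<Longrightarrow> poly_deg d (\<lambda>x. \<Sum>i\<in>I. g i x)"
  by (induction I rule: finite_induct) (auto intro: poly_deg_add poly_deg_const)

lemma poly_deg_mono:
  assumes "poly_deg d p" "d \<le> e" shows "poly_deg e p"
proof -
  from assms obtain c where "p = (\<lambda>x. \<Sum>\<alpha>\<in>multi_indices d. c \<alpha> * monomial_fun \<alpha> x)"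
    by (auto simp: poly_deg_iff)
  moreover have "poly_deg e (\<lambda>x. \<Sum>\<alpha>\<in>multi_indices d. c \<alpha> * monomial_fun \<alpha> x)"
    using assms(2) by (intro poly_deg_sum poly_deg_scale poly_deg_monomial_fun finite_multi_indices)
      (auto simp: multi_indices_def)
  ultimately show ?thesis by simp
qed

lemma monomial_fun_add: "monomial_fun (\<lambda>i. \<alpha> i + \<beta> i) x = monomial_fun \<alpha> x * monomial_fun \<beta> x"
  by (simp add: monomial_fun_def power_add prod.distrib)

lemma poly_deg_mult:
  assumes "poly_deg d p" "poly_deg e q" shows "poly_deg (d + e) (\<lambda>x. p x * q x)"
proof -
  from assms obtain c c' where p: "p = (\<lambda>x. \<Sum>\<alpha>\<in>multi_indices d. c \<alpha> * monomial_fun \<alpha> x)"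
    and q: "q = (\<lambda>x. \<Sum>\<beta>\<in>multi_indices e. c' \<beta> * monomial_fun \<beta> x)"
    by (auto simp: poly_deg_iff)
  have pq: "p x * q x = (\<Sum>\<alpha>\<in>multi_indices d. \<Sum>\<beta>\<in>multi_indices e.
      (c \<alpha> * c' \<beta>) * monomial_fun (\<lambda>i. \<alpha> i + \<beta> i) x)" for x
    unfolding p q sum_product monomial_fun_add by (simp add: algebra_simps)
  have "poly_deg (d + e) (\<lambda>x. \<Sum>\<alpha>\<in>multi_indices d. \<Sum>\<beta>\<in>multi_indices e.
      (c \<alpha> * c' \<beta>) * monomial_fun (\<lambda>i. \<alpha> i + \<beta> i) x)"
    by (intro poly_deg_sum poly_deg_scale poly_deg_monomial_fun finite_multi_indices)
      (auto simp: multi_indices_def sum.distrib intro: add_mono)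
  then show ?thesis unfolding pq .
qed

lemma poly_deg_component: "poly_deg 1 (\<lambda>x::real^'n. x $ i)"
proof -
  have e: "monomial_fun (\<lambda>j. if j = i then 1 else 0) = (\<lambda>x::real^'n. x $ i)"
  proof
    fix x :: "real^'n"
    have "monomial_fun (\<lambda>j. if j = i then 1 else 0) x = (\<Prod>j\<in>UNIV. if j = i then x $ i else 1)"
      unfolding monomial_fun_def by (rule prod.cong) auto
    also have "\<dots> = x $ i" by (simp add: prod.delta)
    finally show "monomial_fun (\<lambda>j. if j = i then 1 else 0) x = x $ i" .
  qed
  have "poly_deg 1 (monomial_fun (\<lambda>j::'n. if j = i then 1 else 0))"
    by (intro poly_deg_monomial_fun) (simp add: sum.delta)
  then show ?thesis unfolding e .
qed

lemma continuous_on_monomial_fun: "continuous_on S (monomial_fun \<alpha>)"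
  unfolding monomial_fun_def by (intro continuous_intros)

lemma continuous_on_poly_deg: "poly_deg d p \<Longrightarrow> continuous_on S p"
  unfolding poly_deg_iff by (auto intro!: continuous_on_sum continuous_on_mult continuous_on_const
    continuous_on_monomial_fun)

lemma continuous_on_polynomial_fun: "polynomial_fun p \<Longrightarrow> continuous_on S p"
  unfolding polynomial_fun_def by (auto intro: continuous_on_poly_deg)

lemma polynomial_fun_bounded_linear:
  fixes f :: "real^'n \<Rightarrow> real"
  assumes "bounded_linear f" shows "polynomial_fun f"
proof -
  interpret linear f using assms by (rule bounded_linear.linear)
  have expansion: "f = (\<lambda>x. \<Sum>i\<in>UNIV. f (axis i 1) * x $ i)"
  proof
    fix x :: "real^'n"
    have "f x = f (\<Sum>i\<in>UNIV. (x $ i) *\<^sub>R axis i 1)"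
      using basis_expansion[of x] by (simp add: scalar_mult_eq_scaleR)
    then show "f x = (\<Sum>i\<in>UNIV. f (axis i 1) * x $ i)" by (simp add: sum scale mult.commute)
  qed
  have "poly_deg 1 (\<lambda>x::real^'n. \<Sum>i\<in>UNIV. f (axis i 1) * x $ i)"
    by (intro poly_deg_sum poly_deg_scale poly_deg_component) auto
  then have "poly_deg 1 f" by (subst expansion)
  then show ?thesis unfolding polynomial_fun_def ..
qed

lemma polynomial_fun_if_real_polynomial_function:
  fixes p :: "real^'n \<Rightarrow> real"
  assumes "real_polynomial_function p" shows "polynomial_fun p"
  using assms
proof induction
  case (linear f)
  then show ?case by (rule polynomial_fun_bounded_linear)
next
  case (const c)
  then show ?case unfolding polynomial_fun_def using poly_deg_const by blast
next
  case (add f g)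
  then obtain d e where "poly_deg d f" "poly_deg e g" by (auto simp: polynomial_fun_def)
  then have "poly_deg (max d e) (\<lambda>x. f x + g x)" by (intro poly_deg_add) (auto intro: poly_deg_mono)
  then show ?case unfolding polynomial_fun_def ..
next
  case (mult f g)
  then obtain d e where "poly_deg d f" "poly_deg e g" by (auto simp: polynomial_fun_def)
  then have "poly_deg (d + e) (\<lambda>x. f x * g x)" by (rule poly_deg_mult)
  then show ?case unfolding polynomial_fun_def ..
qed

lemma polynomial_fun_uniform_approx:
  fixes g :: "real^'n \<Rightarrow> real"
  assumes "compact K" "continuous_on K g" "0 < e"
  obtains q where "polynomial_fun q" "\<And>x. x \<in> K \<Longrightarrow> \<bar>g x - q x\<bar> < e"
proof -
  obtain q where "real_polynomial_function q" "\<And>x. x \<in> K \<Longrightarrow> \<bar>g x - q x\<bar> < e"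
    using Stone_Weierstrass_real_polynomial_function[OF assms] by blast
  then show thesis using that polynomial_fun_if_real_polynomial_function by blast
qed

section \<open>Orthogonal projection in \<open>L\<^sup>2\<close>\<close>

definition square_integrable :: "'a measure \<Rightarrow> ('a \<Rightarrow> real) \<Rightarrow> bool" where
  "square_integrable M u \<longleftrightarrow> u \<in> borel_measurable M \<and> integrable M (\<lambda>x. (u x)\<^sup>2)"

definition L2_inner :: "'a measure \<Rightarrow> ('a \<Rightarrow> real) \<Rightarrow> ('a \<Rightarrow> real) \<Rightarrow> real" where
  "L2_inner M u v = (\<integral>x. u x * v x \<partial>M)"

lemma square_integrable_imp_integrable_mult:
  assumes "square_integrable M u" "square_integrable M v"
  shows "integrable M (\<lambda>x. u x * v x)"
proof (rule Bochner_Integration.integrable_bound)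
  show "integrable M (\<lambda>x. (u x)\<^sup>2 + (v x)\<^sup>2)" using assms by (auto simp: square_integrable_def)
  show "AE x in M. norm (u x * v x) \<le> norm ((u x)\<^sup>2 + (v x)\<^sup>2)"
  proof (intro AE_I2)
    fix x
    have "2 * (\<bar>u x\<bar> * \<bar>v x\<bar>) \<le> (u x)\<^sup>2 + (v x)\<^sup>2"
      using sum_squares_bound[of "\<bar>u x\<bar>" "\<bar>v x\<bar>"] by (simp add: mult.assoc)
    moreover have "0 \<le> \<bar>u x\<bar> * \<bar>v x\<bar>" by simp
    ultimately have "\<bar>u x\<bar> * \<bar>v x\<bar> \<le> (u x)\<^sup>2 + (v x)\<^sup>2" by linarith
    then show "norm (u x * v x) \<le> norm ((u x)\<^sup>2 + (v x)\<^sup>2)" by (simp add: abs_mult)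
  qed
qed (use assms in \<open>auto simp: square_integrable_def\<close>)

lemma square_integrable_add:
  assumes "square_integrable M u" "square_integrable M v"
  shows "square_integrable M (\<lambda>x. u x + v x)"
proof -
  have "integrable M (\<lambda>x. (u x)\<^sup>2 + (v x)\<^sup>2 + 2 * (u x * v x))"
    using assms square_integrable_imp_integrable_mult[OF assms] by (auto simp: square_integrable_def)
  moreover have "(\<lambda>x. u x + v x) \<in> borel_measurable M" using assms by (auto simp: square_integrable_def)
  ultimately show ?thesis by (simp add: square_integrable_def power2_sum mult.assoc)
qed

lemma square_integrable_scale:
  "square_integrable M u \<Longrightarrow> square_integrable M (\<lambda>x. a * u x)"
  by (auto simp: square_integrable_def power_mult_distrib)

lemma square_integrable_diff:
  assumes "square_integrable M u" "square_integrable M v"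
  shows "square_integrable M (\<lambda>x. u x - v x)"
  using square_integrable_add[OF assms(1) square_integrable_scale[OF assms(2), of "-1"]] by simp

lemma square_integrable_lincomb:
  "finite I \<Longrightarrow> (\<And>i. i \<in> I \<Longrightarrow> square_integrable M (b i)) \<Longrightarrow>
    square_integrable M (\<lambda>x. \<Sum>i\<in>I. c i * b i x)"
proof (induction I rule: finite_induct)
  case empty
  then show ?case by (simp add: square_integrable_def)
next
  case (insert i I)
  then show ?case by (simp add: square_integrable_add square_integrable_scale)
qed

lemma square_integrable_bounded:
  assumes "finite_measure M" "u \<in> borel_measurable M" "AE x in M. \<bar>u x\<bar> \<le> B"
  shows "square_integrable M u"
proof -
  interpret finite_measure M by fact
  have "AE x in M. norm ((u x)\<^sup>2) \<le> B\<^sup>2"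
    using assms(3) by eventually_elim (simp, metis abs_ge_zero power2_abs power_mono)
  moreover have "(\<lambda>x. (u x)\<^sup>2) \<in> borel_measurable M" using assms(2) by measurable
  ultimately have "integrable M (\<lambda>x. (u x)\<^sup>2)" by (rule integrable_const_bound)
  then show ?thesis using assms(2) by (simp add: square_integrable_def)
qed

lemma L2_inner_commute: "L2_inner M u v = L2_inner M v u"
  by (simp add: L2_inner_def mult.commute)

lemma L2_inner_add_left:
  assumes "square_integrable M u" "square_integrable M v" "square_integrable M w"
  shows "L2_inner M (\<lambda>x. u x + v x) w = L2_inner M u w + L2_inner M v w"
  unfolding L2_inner_def distrib_right
  using assms by (intro Bochner_Integration.integral_add square_integrable_imp_integrable_mult)

lemma L2_inner_scale_left: "L2_inner M (\<lambda>x. a * u x) w = a * L2_inner M u w"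
  by (simp add: L2_inner_def mult.assoc)

lemma L2_inner_diff_left:
  assumes "square_integrable M u" "square_integrable M v" "square_integrable M w"
  shows "L2_inner M (\<lambda>x. u x - v x) w = L2_inner M u w - L2_inner M v w"
  unfolding L2_inner_def left_diff_distrib
  using assms by (intro Bochner_Integration.integral_diff square_integrable_imp_integrable_mult)

lemma L2_inner_lincomb_left:
  assumes "finite I" "\<And>i. i \<in> I \<Longrightarrow> square_integrable M (b i)" "square_integrable M w"
  shows "L2_inner M (\<lambda>x. \<Sum>i\<in>I. c i * b i x) w = (\<Sum>i\<in>I. c i * L2_inner M (b i) w)"
proof -
  have "L2_inner M (\<lambda>x. \<Sum>i\<in>I. c i * b i x) w = (\<integral>x. (\<Sum>i\<in>I. c i * (b i x * w x)) \<partial>M)"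
    unfolding L2_inner_def by (simp add: sum_distrib_right mult.assoc)
  also have "\<dots> = (\<Sum>i\<in>I. \<integral>x. c i * (b i x * w x) \<partial>M)"
    using assms by (intro Bochner_Integration.integral_sum integrable_mult_right
        square_integrable_imp_integrable_mult) auto
  finally show ?thesis by (simp add: L2_inner_def)
qed

lemma L2_inner_self: "L2_inner M u u = (\<integral>x. (u x)\<^sup>2 \<partial>M)"
  by (simp add: L2_inner_def power2_eq_square)

lemma L2_inner_self_nonneg: "0 \<le> L2_inner M u u"
  unfolding L2_inner_self by (intro integral_nonneg_AE) auto

lemma L2_inner_self_eq_0_iff:
  assumes "square_integrable M u"
  shows "L2_inner M u u = 0 \<longleftrightarrow> (AE x in M. u x = 0)"
  using assms integral_nonneg_eq_0_iff_AE[of M "\<lambda>x. u x * u x"]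
  by (auto simp: L2_inner_def square_integrable_def power2_eq_square)

lemma L2_inner_null_left: "AE x in M. u x = 0 \<Longrightarrow> L2_inner M u v = 0"
  unfolding L2_inner_def by (rule integral_eq_zero_AE) auto

lemma L2_inner_add_self_orthogonal:
  assumes "square_integrable M u" "square_integrable M v" "L2_inner M u v = 0"
  shows "L2_inner M (\<lambda>x. u x + v x) (\<lambda>x. u x + v x) = L2_inner M u u + L2_inner M v v"
proof -
  have uv: "square_integrable M (\<lambda>x. u x + v x)" using assms(1,2) by (rule square_integrable_add)
  have "L2_inner M (\<lambda>x. u x + v x) (\<lambda>x. u x + v x)
      = L2_inner M (\<lambda>x. u x + v x) u + L2_inner M (\<lambda>x. u x + v x) v"
    using L2_inner_add_left[OF assms(1,2) uv] by (simp add: L2_inner_commute)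
  also have "\<dots> = L2_inner M u u + L2_inner M v v"
    using L2_inner_add_left[OF assms(1,2) assms(1)] L2_inner_add_left[OF assms(1,2) assms(2)] assms(3)
    by (simp add: L2_inner_commute)
  finally show ?thesis .
qed

text \<open>If \<open>r\<close> is null then so is \<open>L2_inner M w r\<close>, and the coefficient is \<open>0\<close> by division by zero.\<close>

lemma L2_inner_orthogonal_correction:
  assumes w: "square_integrable M w" and r: "square_integrable M r"
  shows "L2_inner M (\<lambda>x. w x - L2_inner M w r / L2_inner M r r * r x) r = 0"
proof -
  define s where "s = L2_inner M w r / L2_inner M r r"
  have "L2_inner M w r = s * L2_inner M r r"
  proof (cases "L2_inner M r r = 0")
    case True
    then have "AE x in M. r x = 0" using L2_inner_self_eq_0_iff[OF r] by simp
    then have "L2_inner M r w = 0" by (rule L2_inner_null_left)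
    then show ?thesis using True by (simp add: L2_inner_commute)
  qed (simp add: s_def)
  then have "L2_inner M (\<lambda>x. w x - s * r x) r = 0"
    using L2_inner_diff_left[OF w square_integrable_scale[OF r] r] by (simp add: L2_inner_scale_left)
  then show ?thesis unfolding s_def .
qed

lemma L2_projection_insert:
  assumes I: "finite I" "k \<notin> I" and b: "\<And>i. i \<in> insert k I \<Longrightarrow> square_integrable M (b i)"
    and h: "square_integrable M h"
    and c0: "\<forall>j\<in>I. L2_inner M (\<lambda>x. h x - (\<Sum>i\<in>I. c0 i * b i x)) (b j) = 0"
    and ct: "\<forall>j\<in>I. L2_inner M (\<lambda>x. b k x - (\<Sum>i\<in>I. ct i * b i x)) (b j) = 0"
  shows "\<exists>c. \<forall>j\<in>insert k I. L2_inner M (\<lambda>x. h x - (\<Sum>i\<in>insert k I. c i * b i x)) (b j) = 0"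
proof -
  \<comment> \<open>Gram-Schmidt: \<open>t\<close> is the projection of \<open>b k\<close> onto the span of the \<open>b i\<close>, \<open>i \<in> I\<close>, and the
    residual \<open>w\<close> of \<open>h\<close> is corrected along \<open>r = b k - t\<close>.\<close>
  define w where "w = (\<lambda>x. h x - (\<Sum>i\<in>I. c0 i * b i x))"
  define t where "t = (\<lambda>x. \<Sum>i\<in>I. ct i * b i x)"
  define r where "r = (\<lambda>x. b k x - t x)"
  define s where "s = L2_inner M w r / L2_inner M r r"
  define c where "c i = (if i = k then s else c0 i - s * ct i)" for i
  have bI: "\<And>i. i \<in> I \<Longrightarrow> square_integrable M (b i)" using b by blast
  have t: "square_integrable M t" unfolding t_def using I(1) bI by (rule square_integrable_lincomb)
  have w: "square_integrable M w"
    unfolding w_def using I(1) bI h by (intro square_integrable_diff square_integrable_lincomb)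
  have r: "square_integrable M r" unfolding r_def using b t by (intro square_integrable_diff) auto
  have u: "square_integrable M (\<lambda>x. w x - s * r x)" using w r by (intro square_integrable_diff square_integrable_scale)
  have residual: "h x - (\<Sum>i\<in>insert k I. c i * b i x) = w x - s * r x" for x
  proof -
    have "(\<Sum>i\<in>I. c i * b i x) = (\<Sum>i\<in>I. c0 i * b i x) - s * t x"
      unfolding t_def sum_distrib_left sum_subtractf[symmetric]
      using I(2) by (intro sum.cong) (auto simp: c_def algebra_simps)
    then show ?thesis using I by (simp add: c_def w_def r_def algebra_simps)
  qed
  have perp_I: "L2_inner M (\<lambda>x. w x - s * r x) (b j) = 0" if "j \<in> I" for j
    using c0 ct that L2_inner_diff_left[OF w square_integrable_scale[OF r] bI[OF that]]
    by (simp add: w_def r_def t_def L2_inner_scale_left)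
  have perp_t: "L2_inner M (\<lambda>x. w x - s * r x) t = 0"
    using L2_inner_lincomb_left[OF I(1) bI u, where c = ct] perp_I by (simp add: t_def L2_inner_commute)
  have perp_r: "L2_inner M (\<lambda>x. w x - s * r x) r = 0"
    unfolding s_def using w r by (rule L2_inner_orthogonal_correction)
  have "b k = (\<lambda>x. t x + r x)" by (simp add: r_def)
  then have "L2_inner M (\<lambda>x. w x - s * r x) (b k) = 0"
    using L2_inner_add_left[OF t r u] perp_t perp_r by (simp add: L2_inner_commute)
  then show ?thesis using perp_I residual by (intro exI[of _ c]) auto
qed

lemma L2_projection_exists:
  assumes "finite I" "\<And>i. i \<in> I \<Longrightarrow> square_integrable M (b i)" "square_integrable M h"
  shows "\<exists>c. \<forall>j\<in>I. L2_inner M (\<lambda>x. h x - (\<Sum>i\<in>I. c i * b i x)) (b j) = 0"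
  using assms
proof (induction I arbitrary: h rule: finite_induct)
  case (insert k I)
  then have bI: "\<And>i. i \<in> I \<Longrightarrow> square_integrable M (b i)" by blast
  obtain c0 where "\<forall>j\<in>I. L2_inner M (\<lambda>x. h x - (\<Sum>i\<in>I. c0 i * b i x)) (b j) = 0"
    using insert.IH[OF bI insert.prems(2)] by blast
  moreover obtain ct where "\<forall>j\<in>I. L2_inner M (\<lambda>x. b k x - (\<Sum>i\<in>I. ct i * b i x)) (b j) = 0"
    using insert.IH[OF bI insert.prems(1)] by blast
  ultimately show ?case using insert.hyps insert.prems by (intro L2_projection_insert)
qed simp

lemma L2_projection_unique:
  assumes W: "\<And>p. p \<in> W \<Longrightarrow> square_integrable M p"
      "\<And>p q. p \<in> W \<Longrightarrow> q \<in> W \<Longrightarrow> (\<lambda>x. p x - q x) \<in> W"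
      "\<And>p. p \<in> W \<Longrightarrow> AE x in M. p x = 0 \<Longrightarrow> p = (\<lambda>_. 0)"
    and h: "square_integrable M h"
    and g1: "g1 \<in> W" "\<forall>p\<in>W. L2_inner M (\<lambda>x. h x - g1 x) p = 0"
    and g2: "g2 \<in> W" "\<forall>p\<in>W. L2_inner M (\<lambda>x. h x - g2 x) p = 0"
  shows "g1 = g2"
proof -
  define p where "p = (\<lambda>x. g1 x - g2 x)"
  have p: "p \<in> W" unfolding p_def using g1(1) g2(1) by (rule W(2))
  have "L2_inner M p p = L2_inner M (\<lambda>x. h x - g2 x) p - L2_inner M (\<lambda>x. h x - g1 x) p"
    using L2_inner_diff_left[OF square_integrable_diff[OF h W(1)[OF g2(1)]]
        square_integrable_diff[OF h W(1)[OF g1(1)]] W(1)[OF p]]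
    by (simp add: p_def)
  also have "\<dots> = 0" using g1(2) g2(2) p by simp
  finally have "p = (\<lambda>_. 0)" using W(3)[OF p] L2_inner_self_eq_0_iff[OF W(1)[OF p]] by simp
  then show ?thesis by (auto simp: p_def fun_eq_iff)
qed

lemma L2_projection_norm_tendsto:
  fixes W :: "nat \<Rightarrow> ('a \<Rightarrow> real) set"
  assumes W: "\<And>d p. p \<in> W d \<Longrightarrow> square_integrable M p"
      "\<And>d p q. p \<in> W d \<Longrightarrow> q \<in> W d \<Longrightarrow> (\<lambda>x. p x - q x) \<in> W d" "mono W"
    and h: "square_integrable M h"
    and g: "\<And>d. g d \<in> W d" "\<And>d p. p \<in> W d \<Longrightarrow> L2_inner M (\<lambda>x. h x - g d x) p = 0"
    and dense: "\<And>e. 0 < e \<Longrightarrow> \<exists>d. \<exists>q\<in>W d. (\<integral>x. (h x - q x)\<^sup>2 \<partial>M) < e"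
  shows "(\<lambda>d. \<integral>x. (g d x)\<^sup>2 \<partial>M) \<longlonglongrightarrow> (\<integral>x. (h x)\<^sup>2 \<partial>M)"
  unfolding L2_inner_self[symmetric]
proof (rule LIMSEQ_I)
  fix e :: real assume "0 < e"
  then obtain d0 q where q: "q \<in> W d0" "L2_inner M (\<lambda>x. h x - q x) (\<lambda>x. h x - q x) < e"
    using dense unfolding L2_inner_self[symmetric] by blast
  have "norm (L2_inner M (g d) (g d) - L2_inner M h h) < e" if "d0 \<le> d" for d
  proof -
    let ?e = "\<lambda>x. h x - g d x"
    have gd: "square_integrable M (g d)" and e: "square_integrable M ?e"
      using W(1)[OF g(1)] h by (auto intro: square_integrable_diff)
    have "q \<in> W d" using q(1) \<open>mono W\<close> that by (auto dest: monoD)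
    with g(1) have gq: "(\<lambda>x. g d x - q x) \<in> W d" by (rule W(2))
    have "L2_inner M h h = L2_inner M ?e ?e + L2_inner M (g d) (g d)"
      using L2_inner_add_self_orthogonal[OF e gd g(2)[OF g(1)]] by simp
    moreover have "L2_inner M (\<lambda>x. h x - q x) (\<lambda>x. h x - q x)
        = L2_inner M ?e ?e + L2_inner M (\<lambda>x. g d x - q x) (\<lambda>x. g d x - q x)"
      using L2_inner_add_self_orthogonal[OF e W(1)[OF gq] g(2)[OF gq]] by simp
    ultimately show ?thesis
      using q(2) L2_inner_self_nonneg[of M ?e] L2_inner_self_nonneg[of M "\<lambda>x. g d x - q x"] by simp
  qed
  then show "\<exists>d0. \<forall>d\<ge>d0. norm (L2_inner M (g d) (g d) - L2_inner M h h) < e" by blast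
qed

section \<open>Density of polynomials in \<open>L\<^sup>2\<close>\<close>

lemma indicator_L1_approx_continuous:
  fixes M :: "'a::euclidean_space measure" and e :: real
  assumes M: "sets M = sets borel" "finite_measure M" and A: "A \<in> sets M" and e: "0 < e"
  obtains g :: "'a \<Rightarrow> real" where "continuous_on UNIV g" "integrable M g" "(\<integral>x. \<bar>indicator A x - g x\<bar> \<partial>M) < e"
proof -
  interpret finite_measure M by (rule M(2))
  have fin: "emeasure M (space M) \<noteq> \<infinity>" by simp
  have Ab: "A \<in> sets borel" using A M(1) by simp
  have e2: "0 < e / 2" using e by simp
  have "{K. K \<subseteq> A \<and> compact K} \<noteq> {}" using compact_empty by blast
  then obtain C where C: "C \<subseteq> A" "compact C" "emeasure M A < emeasure M C + ennreal (e / 2)"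
    using SUP_approx_ennreal[OF e2 _ inner_regular[OF M(1) fin Ab]] by (auto simp: emeasure_eq_measure)
  obtain U where U: "A \<subseteq> U" "open U" "emeasure M U < emeasure M A + ennreal (e / 2)"
    using INF_approx_ennreal[OF e2 outer_regular[OF M(1) fin Ab]] by (auto simp: emeasure_eq_measure)
  have C_sets: "C \<in> sets M" and U_sets: "U \<in> sets M"
    using C(2) U(2) M(1) by (auto simp: borel_compact)
  have "measure M A < measure M C + e / 2" "measure M U < measure M A + e / 2"
    using C(3) U(3) e
    by (simp_all add: emeasure_eq_measure ennreal_plus[symmetric] ennreal_less_iff del: ennreal_plus)
  then have UC: "measure M (U - C) < e"
    using finite_measure_Diff[OF U_sets C_sets] C(1) U(1) by auto
  obtain g :: "'a \<Rightarrow> real" where g: "continuous_on UNIV g" "\<And>x. g x \<in> closed_segment 1 0"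
      "\<And>x. x \<in> C \<Longrightarrow> g x = 1" "\<And>x. x \<in> - U \<Longrightarrow> g x = 0"
    using Urysohn[of C "- U" 1 0] C U compact_imp_closed by blast
  have g01: "0 \<le> g x \<and> g x \<le> 1" for x
    using g(2)[of x] by (simp add: closed_segment_eq_real_ivl)
  have g_meas: "g \<in> borel_measurable M"
    using borel_measurable_continuous_onI[OF g(1)] by (simp add: measurable_cong_sets[OF M(1) refl])
  have g_int: "integrable M g"
    using g01 g_meas by (intro integrable_const_bound[where B=1]) auto
  have "\<bar>indicator A x - g x\<bar> \<le> indicator (U - C) x" for x
    using g(3,4)[of x] g01[of x] C(1) U(1) by (auto simp: indicator_def)
  then have "(\<integral>x. \<bar>indicator A x - g x\<bar> \<partial>M) \<le> (\<integral>x. indicator (U - C) x \<partial>M)"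
    using A U_sets C_sets g_int by (intro integral_mono) (auto simp: emeasure_eq_measure)
  then have "(\<integral>x. \<bar>indicator A x - g x\<bar> \<partial>M) < e"
    using UC U_sets C_sets by simp
  with g(1) g_int show thesis by (rule that)
qed

definition L1_continuous_approximable :: "'a::topological_space measure \<Rightarrow> ('a \<Rightarrow> real) \<Rightarrow> bool" where
  "L1_continuous_approximable M u \<longleftrightarrow>
    (\<forall>e>0. \<exists>g. continuous_on UNIV g \<and> integrable M g \<and> (\<integral>x. \<bar>u x - g x\<bar> \<partial>M) < e)"

lemma L1_continuous_approximable_indicator:
  fixes M :: "'a::euclidean_space measure"
  assumes M: "sets M = sets borel" "finite_measure M" and A: "A \<in> sets M"
  shows "L1_continuous_approximable M (\<lambda>x. indicator A x *\<^sub>R c)"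
  unfolding L1_continuous_approximable_def
proof (intro allI impI)
  fix e :: real assume "0 < e"
  then obtain g where g: "continuous_on UNIV g" "integrable M g"
    "(\<integral>x. \<bar>indicator A x - g x\<bar> \<partial>M) < e / (\<bar>c\<bar> + 1)"
    using indicator_L1_approx_continuous[OF M A, of "e / (\<bar>c\<bar> + 1)"] by auto
  have "\<bar>indicator A x *\<^sub>R c - c * g x\<bar> = \<bar>c\<bar> * \<bar>indicator A x - g x\<bar>" for x
    by (simp add: abs_mult[symmetric] algebra_simps)
  then have "(\<integral>x. \<bar>indicator A x *\<^sub>R c - c * g x\<bar> \<partial>M) = \<bar>c\<bar> * (\<integral>x. \<bar>indicator A x - g x\<bar> \<partial>M)"
    by simp
  also have "\<dots> \<le> \<bar>c\<bar> * (e / (\<bar>c\<bar> + 1))" using g(3) by (intro mult_left_mono) auto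
  also have "\<dots> < e" using \<open>0 < e\<close> by (simp add: field_simps)
  finally show "\<exists>h. continuous_on UNIV h \<and> integrable M h \<and>
      (\<integral>x. \<bar>indicator A x *\<^sub>R c - h x\<bar> \<partial>M) < e"
    using g by (intro exI[of _ "\<lambda>x. c * g x"]) (auto intro: continuous_intros)
qed

lemma L1_continuous_approximable_add:
  assumes "integrable M f" "integrable M g"
    and "L1_continuous_approximable M f" "L1_continuous_approximable M g"
  shows "L1_continuous_approximable M (\<lambda>x. f x + g x)"
  unfolding L1_continuous_approximable_def
proof (intro allI impI)
  fix e :: real assume "0 < e"
  then obtain f' g' where f': "continuous_on UNIV f'" "integrable M f'" "(\<integral>x. \<bar>f x - f' x\<bar> \<partial>M) < e / 2"
    and g': "continuous_on UNIV g'" "integrable M g'" "(\<integral>x. \<bar>g x - g' x\<bar> \<partial>M) < e / 2"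
    using assms(3,4) half_gt_zero unfolding L1_continuous_approximable_def by meson
  have "(\<integral>x. \<bar>(f x + g x) - (f' x + g' x)\<bar> \<partial>M) \<le> (\<integral>x. \<bar>f x - f' x\<bar> + \<bar>g x - g' x\<bar> \<partial>M)"
    using assms(1,2) f' g' by (intro integral_mono) auto
  also have "\<dots> = (\<integral>x. \<bar>f x - f' x\<bar> \<partial>M) + (\<integral>x. \<bar>g x - g' x\<bar> \<partial>M)"
    using assms(1,2) f' g' by (intro Bochner_Integration.integral_add) auto
  also have "\<dots> < e" using f'(3) g'(3) by simp
  finally show "\<exists>h. continuous_on UNIV h \<and> integrable M h \<and> (\<integral>x. \<bar>(f x + g x) - h x\<bar> \<partial>M) < e"
    using f' g' by (intro exI[of _ "\<lambda>x. f' x + g' x"]) (auto intro: continuous_intros)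
qed

lemma L1_continuous_approximable_lim:
  assumes s: "\<And>i. integrable M (s i)" "\<And>i. L1_continuous_approximable M (s i)"
    and lim: "\<And>x. x \<in> space M \<Longrightarrow> (\<lambda>i. s i x) \<longlonglongrightarrow> f x"
    and bound: "\<And>i x. x \<in> space M \<Longrightarrow> norm (s i x) \<le> 2 * norm (f x)"
    and f: "integrable M f"
  shows "L1_continuous_approximable M f"
  unfolding L1_continuous_approximable_def
proof (intro allI impI)
  fix e :: real assume "0 < e"
  have "(\<lambda>i. \<integral>x. \<bar>f x - s i x\<bar> \<partial>M) \<longlonglongrightarrow> (\<integral>x. 0 \<partial>M)"
  proof (rule integral_dominated_convergence[where w="\<lambda>x. 3 * \<bar>f x\<bar>"])
    show "AE x in M. (\<lambda>i. \<bar>f x - s i x\<bar>) \<longlonglongrightarrow> 0"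
    proof (intro AE_I2)
      fix x assume "x \<in> space M"
      then have "(\<lambda>i. f x - s i x) \<longlonglongrightarrow> f x - f x" using lim by (intro tendsto_intros)
      then show "(\<lambda>i. \<bar>f x - s i x\<bar>) \<longlonglongrightarrow> 0" using tendsto_rabs by fastforce
    qed
    show "AE x in M. norm \<bar>f x - s i x\<bar> \<le> 3 * \<bar>f x\<bar>" for i
      using bound[of _ i] by (intro AE_I2) (auto intro: order_trans[OF abs_triangle_ineq4])
  qed (use s f in auto)
  then obtain i where i: "(\<integral>x. \<bar>f x - s i x\<bar> \<partial>M) < e / 2"
    using \<open>0 < e\<close> by (auto dest!: LIMSEQ_D[of _ _ "e / 2"])
  obtain g where g: "continuous_on UNIV g" "integrable M g" "(\<integral>x. \<bar>s i x - g x\<bar> \<partial>M) < e / 2"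
    using s(2)[of i] \<open>0 < e\<close> half_gt_zero unfolding L1_continuous_approximable_def by blast
  have "(\<integral>x. \<bar>f x - g x\<bar> \<partial>M) \<le> (\<integral>x. \<bar>f x - s i x\<bar> + \<bar>s i x - g x\<bar> \<partial>M)"
    using s f g by (intro integral_mono) auto
  also have "\<dots> = (\<integral>x. \<bar>f x - s i x\<bar> \<partial>M) + (\<integral>x. \<bar>s i x - g x\<bar> \<partial>M)"
    using s f g by (intro Bochner_Integration.integral_add) auto
  also have "\<dots> < e" using i g(3) by simp
  finally show "\<exists>g. continuous_on UNIV g \<and> integrable M g \<and> (\<integral>x. \<bar>f x - g x\<bar> \<partial>M) < e"
    using g by blast
qed

lemma continuous_dense_L1:
  fixes M :: "'a::euclidean_space measure" and u :: "'a \<Rightarrow> real"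
  assumes M: "sets M = sets borel" "finite_measure M" and "integrable M u"
  shows "L1_continuous_approximable M u"
  using assms(3)
proof (induction rule: integrable_induct)
  case (base A c)
  show ?case by (rule L1_continuous_approximable_indicator[OF M base(1)])
next
  case (add f g)
  then show ?case by (rule L1_continuous_approximable_add)
next
  case (lim f s)
  show ?case by (rule L1_continuous_approximable_lim[OF lim.hyps(1) lim.IH lim.hyps(2-4)])
qed

lemma square_integrable_continuous_on:
  fixes g :: "'a::topological_space \<Rightarrow> real"
  assumes "finite_measure M" "compact K" "AE x in M. x \<in> K"
    and "g \<in> borel_measurable M" "continuous_on K g"
  shows "square_integrable M g"
proof -
  obtain B where B: "\<And>x. x \<in> K \<Longrightarrow> \<bar>g x\<bar> \<le> B"
    using compact_imp_bounded[OF compact_continuous_image[OF assms(5,2)]] by (auto simp: bounded_iff)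
  have "AE x in M. \<bar>g x\<bar> \<le> B" using assms(3) by eventually_elim (rule B)
  with assms(1,4) show ?thesis by (rule square_integrable_bounded)
qed

lemma integral_square_diff_triangle:
  assumes "square_integrable M u" "square_integrable M v" "square_integrable M w"
  shows "(\<integral>x. (u x - w x)\<^sup>2 \<partial>M) \<le> 2 * (\<integral>x. (u x - v x)\<^sup>2 \<partial>M) + 2 * (\<integral>x. (v x - w x)\<^sup>2 \<partial>M)"
proof -
  have uv: "integrable M (\<lambda>x. (u x - v x)\<^sup>2)" and vw: "integrable M (\<lambda>x. (v x - w x)\<^sup>2)"
    and uw: "integrable M (\<lambda>x. (u x - w x)\<^sup>2)"
    using square_integrable_diff[OF assms(1,2)] square_integrable_diff[OF assms(2,3)]
      square_integrable_diff[OF assms(1,3)] by (simp_all add: square_integrable_def)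
  have "(u x - w x)\<^sup>2 \<le> 2 * (u x - v x)\<^sup>2 + 2 * (v x - w x)\<^sup>2" for x
    using sum_squares_bound[of "u x - v x" "v x - w x"] by (simp add: power2_eq_square algebra_simps)
  then have "(\<integral>x. (u x - w x)\<^sup>2 \<partial>M) \<le> (\<integral>x. 2 * (u x - v x)\<^sup>2 + 2 * (v x - w x)\<^sup>2 \<partial>M)"
    using uv vw uw by (intro integral_mono) auto
  also have "\<dots> = 2 * (\<integral>x. (u x - v x)\<^sup>2 \<partial>M) + 2 * (\<integral>x. (v x - w x)\<^sup>2 \<partial>M)"
    using uv vw by simp
  finally show ?thesis .
qed

lemma continuous_dense_L2_bounded:
  fixes M :: "'a::euclidean_space measure" and u :: "'a \<Rightarrow> real"
  assumes M: "sets M = sets borel" "finite_measure M"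
    and u: "u \<in> borel_measurable M" "\<And>x. \<bar>u x\<bar> \<le> B" and e: "0 < e"
  obtains g where "continuous_on UNIV g" "\<And>x. \<bar>g x\<bar> \<le> B" "(\<integral>x. (u x - g x)\<^sup>2 \<partial>M) < e"
proof -
  interpret finite_measure M by (rule M(2))
  have B: "0 \<le> B" using abs_ge_zero[of "u undefined"] u(2)[of undefined] by linarith
  have "integrable M u" using u by (intro integrable_const_bound[where B=B]) auto
  moreover have "0 < e / (2 * B + 1)" using e B by simp
  ultimately obtain g0 where g0: "continuous_on UNIV g0" "integrable M g0"
      "(\<integral>x. \<bar>u x - g0 x\<bar> \<partial>M) < e / (2 * B + 1)"
    using continuous_dense_L1[OF M] unfolding L1_continuous_approximable_def by blast
  define g where "g x = max (- B) (min B (g0 x))" for x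
  have g: "continuous_on UNIV g" unfolding g_def by (intro continuous_intros g0(1))
  have g_bound: "\<bar>g x\<bar> \<le> B" for x using B by (auto simp: g_def)
  \<comment> \<open>Clipping to \<open>[-B, B]\<close> moves \<open>g0\<close> towards \<open>u\<close>.\<close>
  have "(u x - g x)\<^sup>2 \<le> 2 * B * \<bar>u x - g0 x\<bar>" for x
  proof -
    have "\<bar>u x - g x\<bar> \<le> \<bar>u x - g0 x\<bar>" "\<bar>u x - g x\<bar> \<le> 2 * B"
      using u(2)[of x] by (auto simp: g_def)
    then have "\<bar>u x - g x\<bar> * \<bar>u x - g x\<bar> \<le> 2 * B * \<bar>u x - g0 x\<bar>"
      by (metis abs_ge_zero mult.commute mult_mono)
    then show ?thesis by (simp add: power2_eq_square)
  qed
  moreover have "square_integrable M (\<lambda>x. u x - g x)"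
  proof (rule square_integrable_bounded[OF M(2)])
    show "(\<lambda>x. u x - g x) \<in> borel_measurable M"
      using u(1) borel_measurable_continuous_onI[OF g] by (simp add: measurable_cong_sets[OF M(1) refl])
    show "AE x in M. \<bar>u x - g x\<bar> \<le> 2 * B"
      using u(2) g_bound by (intro AE_I2) (smt (verit))
  qed
  ultimately have "(\<integral>x. (u x - g x)\<^sup>2 \<partial>M) \<le> (\<integral>x. 2 * B * \<bar>u x - g0 x\<bar> \<partial>M)"
    using \<open>integrable M u\<close> g0(2) by (intro integral_mono) (auto simp: square_integrable_def)
  also have "\<dots> = 2 * B * (\<integral>x. \<bar>u x - g0 x\<bar> \<partial>M)" by simp
  also have "\<dots> \<le> 2 * B * (e / (2 * B + 1))" using g0(3) B by (intro mult_left_mono) auto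
  also have "\<dots> < e" using B e by (simp add: field_simps)
  finally show thesis using g g_bound that by blast
qed

lemma continuous_dense_L2:
  fixes M :: "'a::euclidean_space measure" and u :: "'a \<Rightarrow> real"
  assumes M: "sets M = sets borel" "finite_measure M" and u: "square_integrable M u" and e: "0 < e"
  obtains g where "continuous_on UNIV g" "square_integrable M g" "(\<integral>x. (u x - g x)\<^sup>2 \<partial>M) < e"
proof -
  define t where "t n x = max (- real n) (min (real n) (u x))" for n x
  have t_meas: "t n \<in> borel_measurable M" for n
    using u unfolding t_def square_integrable_def by (auto intro!: borel_measurable_max borel_measurable_min)
  have t_bound: "\<bar>t n x\<bar> \<le> real n" for n x by (auto simp: t_def)
  have t: "square_integrable M (t n)" for n
    using t_meas t_bound by (intro square_integrable_bounded[OF M(2)] AE_I2)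
  have "(\<lambda>n. \<integral>x. (u x - t n x)\<^sup>2 \<partial>M) \<longlonglongrightarrow> (\<integral>x. 0 \<partial>M)"
  proof (rule integral_dominated_convergence[where w="\<lambda>x. (u x)\<^sup>2"])
    show "AE x in M. (\<lambda>n. (u x - t n x)\<^sup>2) \<longlonglongrightarrow> 0"
    proof (intro AE_I2 tendsto_eventually eventually_sequentiallyI)
      fix x n assume "nat \<lceil>\<bar>u x\<bar>\<rceil> \<le> n"
      then show "(u x - t n x)\<^sup>2 = 0" by (auto simp: t_def)
    qed
    show "AE x in M. norm ((u x - t n x)\<^sup>2) \<le> (u x)\<^sup>2" for n
      by (intro AE_I2) (auto simp: t_def abs_le_square_iff[symmetric])
    show "(\<lambda>x. (u x - t n x)\<^sup>2) \<in> borel_measurable M" for n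
      using square_integrable_diff[OF u t, of n] unfolding square_integrable_def
      by (auto intro: borel_measurable_integrable)
  qed (use u in \<open>auto simp: square_integrable_def\<close>)
  then obtain n where n: "(\<integral>x. (u x - t n x)\<^sup>2 \<partial>M) < e / 4"
    using e by (auto dest!: LIMSEQ_D[of _ _ "e / 4"])
  obtain g where g: "continuous_on UNIV g" "\<And>x. \<bar>g x\<bar> \<le> real n" "(\<integral>x. (t n x - g x)\<^sup>2 \<partial>M) < e / 4"
    using continuous_dense_L2_bounded[OF M t_meas t_bound, of "e / 4" n] e by auto
  have g_sq: "square_integrable M g"
    using borel_measurable_continuous_onI[OF g(1)] g(2)
    by (intro square_integrable_bounded[OF M(2)] AE_I2) (auto simp: measurable_cong_sets[OF M(1) refl])
  have "(\<integral>x. (u x - g x)\<^sup>2 \<partial>M) \<le> 2 * (\<integral>x. (u x - t n x)\<^sup>2 \<partial>M) + 2 * (\<integral>x. (t n x - g x)\<^sup>2 \<partial>M)"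
    by (rule integral_square_diff_triangle[OF u t g_sq])
  also have "\<dots> < e" using n g(3) by simp
  finally show thesis using g(1) g_sq that by blast
qed

lemma polynomial_dense_L2:
  fixes M :: "(real^'n) measure"
  assumes M: "sets M = sets borel" "finite_measure M" and K: "compact K" "AE x in M. x \<in> K"
    and u: "square_integrable M u" and e: "0 < e"
  obtains q where "polynomial_fun q" "(\<integral>x. (u x - q x)\<^sup>2 \<partial>M) < e"
proof -
  interpret finite_measure M by (rule M(2))
  obtain g where g: "continuous_on UNIV g" "square_integrable M g" "(\<integral>x. (u x - g x)\<^sup>2 \<partial>M) < e / 4"
    using continuous_dense_L2[OF M u, of "e / 4"] e by auto
  define m where "m = measure M (space M)"
  define \<delta> where "\<delta> = sqrt (e / (4 * (m + 1)))"
  have m: "0 \<le> m" by (simp add: m_def)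
  have \<delta>: "0 < \<delta>" "\<delta>\<^sup>2 = e / (4 * (m + 1))" using e m by (simp_all add: \<delta>_def)
  obtain q where q: "polynomial_fun q" "\<And>x. x \<in> K \<Longrightarrow> \<bar>g x - q x\<bar> < \<delta>"
    using polynomial_fun_uniform_approx[OF K(1) continuous_on_subset[OF g(1)] \<delta>(1)] by blast
  have q_sq: "square_integrable M q"
    using borel_measurable_continuous_onI[OF continuous_on_polynomial_fun[OF q(1)]]
    by (intro square_integrable_continuous_on[OF M(2) K] continuous_on_polynomial_fun[OF q(1)])
      (simp add: measurable_cong_sets[OF M(1) refl])
  have "AE x in M. (g x - q x)\<^sup>2 \<le> \<delta>\<^sup>2"
    using K(2) by eventually_elim (metis q(2) abs_ge_zero less_imp_le power2_abs power_mono)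
  then have "(\<integral>x. (g x - q x)\<^sup>2 \<partial>M) \<le> (\<integral>x. \<delta>\<^sup>2 \<partial>M)"
    using square_integrable_diff[OF g(2) q_sq] by (intro integral_mono_AE) (auto simp: square_integrable_def)
  also have "\<dots> = \<delta>\<^sup>2 * m" by (simp add: m_def)
  also have "\<dots> = e / 4 * (m / (m + 1))" using \<delta>(2) m by (simp add: field_simps)
  also have "\<dots> < e / 4" using e m by (simp add: field_simps)
  finally have "(\<integral>x. (u x - q x)\<^sup>2 \<partial>M) < e"
    using integral_square_diff_triangle[OF u g(2) q_sq] g(3) by linarith
  then show thesis using q(1) that by blast
qed

section \<open>Concentration of mollifiers\<close>

lemma integrable_mult_bounded:
  fixes g w :: "'a \<Rightarrow> real"
  assumes "integrable M g" "w \<in> borel_measurable M" "\<And>y. \<bar>w y\<bar> \<le> B"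
  shows "integrable M (\<lambda>y. g y * w y)"
proof (rule Bochner_Integration.integrable_bound)
  show "integrable M (\<lambda>y. B * g y)" using assms(1) by simp
  show "AE y in M. norm (g y * w y) \<le> norm (B * g y)"
  proof (intro AE_I2)
    fix y
    have "\<bar>g y\<bar> * \<bar>w y\<bar> \<le> \<bar>g y\<bar> * \<bar>B\<bar>"
      using order_trans[OF assms(3) abs_ge_self] by (rule mult_left_mono) simp
    then show "norm (g y * w y) \<le> norm (B * g y)" by (simp add: abs_mult mult.commute)
  qed
qed (use assms(1,2) borel_measurable_integrable in measurable)

lemma weighted_average_deviation:
  fixes g w :: "'a \<Rightarrow> real"
  assumes g: "integrable M g" "\<And>y. 0 \<le> g y" "0 < (\<integral>y. g y \<partial>M)"
    and w: "w \<in> borel_measurable M" "\<And>y. \<bar>w y\<bar> \<le> B"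
    and A: "A \<in> sets M" and dev: "AE y in M. \<bar>w y - a\<bar> \<le> \<eta> + C * indicator A y"
  shows "\<bar>(\<integral>y. g y * w y \<partial>M) / (\<integral>y. g y \<partial>M) - a\<bar> \<le> \<eta> + C * ((LINT y:A|M. g y) / (\<integral>y. g y \<partial>M))"
proof -
  define N where "N = (\<integral>y. g y \<partial>M)"
  have gw: "integrable M (\<lambda>y. g y * w y)" using g(1) w by (rule integrable_mult_bounded)
  have gA: "integrable M (\<lambda>y. indicator A y * g y)"
    using integrable_mult_indicator[OF A g(1)] by simp
  have "(\<integral>y. g y * w y \<partial>M) - a * N = (\<integral>y. g y * (w y - a) \<partial>M)"
    using g(1) gw by (simp add: N_def right_diff_distrib mult.commute)
  also have "\<bar>\<dots>\<bar> \<le> (\<integral>y. \<bar>g y * (w y - a)\<bar> \<partial>M)" by (rule integral_abs_bound)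
  also have "\<dots> \<le> (\<integral>y. \<eta> * g y + C * (indicator A y * g y) \<partial>M)"
  proof (rule integral_mono_AE)
    show "AE y in M. \<bar>g y * (w y - a)\<bar> \<le> \<eta> * g y + C * (indicator A y * g y)"
      using dev
    proof eventually_elim
      case (elim y)
      have "\<bar>g y * (w y - a)\<bar> = g y * \<bar>w y - a\<bar>" using g(2)[of y] by (simp add: abs_mult)
      also have "\<dots> \<le> g y * (\<eta> + C * indicator A y)" using elim g(2) by (rule mult_left_mono)
      finally show ?case by (simp add: algebra_simps)
    qed
  qed (use g(1) gw gA in \<open>auto simp: right_diff_distrib\<close>)
  also have "\<dots> = \<eta> * N + C * (LINT y:A|M. g y)"
    using g(1) gA by (simp add: N_def set_lebesgue_integral_def)
  finally have bound: "\<bar>(\<integral>y. g y * w y \<partial>M) - a * N\<bar> \<le> \<eta> * N + C * (LINT y:A|M. g y)" .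
  have "(\<integral>y. g y * w y \<partial>M) / N - a = ((\<integral>y. g y * w y \<partial>M) - a * N) / N"
    using g(3) by (simp add: N_def field_simps)
  then have "\<bar>(\<integral>y. g y * w y \<partial>M) / N - a\<bar> = \<bar>(\<integral>y. g y * w y \<partial>M) - a * N\<bar> / N"
    using g(3) by (simp add: N_def abs_of_pos)
  also have "\<dots> \<le> (\<eta> * N + C * (LINT y:A|M. g y)) / N"
    using bound g(3) by (intro divide_right_mono) (auto simp: N_def)
  also have "\<dots> = \<eta> + C * ((LINT y:A|M. g y) / N)" using g(3) by (simp add: N_def add_divide_distrib)
  finally show ?thesis by (simp add: N_def)
qed

lemma tendsto_within_deviation_bound:
  fixes w :: "'a::real_normed_vector \<Rightarrow> real"
  assumes "(w \<longlongrightarrow> w x) (at x within Z)" "\<And>y. \<bar>w y\<bar> \<le> B" "0 < e"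
  obtains \<delta> where "0 < \<delta>" "\<And>y. y \<in> Z \<Longrightarrow> \<bar>w y - w x\<bar> \<le> e + 2 * B * indicator {y. \<delta> < norm (y - x)} y"
proof -
  obtain \<delta> where \<delta>: "0 < \<delta>" "\<And>y. y \<in> Z \<Longrightarrow> 0 < dist y x \<Longrightarrow> dist y x < \<delta> \<Longrightarrow> dist (w y) (w x) < e"
    using assms(1,3) unfolding Lim_within by blast
  have "0 < \<delta> / 2" using \<delta>(1) by simp
  moreover have "\<bar>w y - w x\<bar> \<le> e + 2 * B * indicator {y. \<delta> / 2 < norm (y - x)} y" if "y \<in> Z" for y
  proof (cases "\<delta> / 2 < norm (y - x)")
    case True
    then show ?thesis using assms(2)[of x] assms(2)[of y] assms(3) by (simp add: abs_le_iff)
  next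
    case False
    then have "dist y x < \<delta>" using \<delta>(1) by (simp add: dist_norm)
    then show ?thesis
      using \<delta>(2)[OF that] assms(3) False by (cases "y = x") (auto simp: dist_real_def)
  qed
  ultimately show thesis by (rule that)
qed

lemma weighted_concentration_tendsto:
  fixes \<psi> :: "'b \<Rightarrow> 'a::real_normed_vector \<Rightarrow> real" and w :: "'a \<Rightarrow> real"
  assumes lam: "sets lam = sets borel" "AE y in lam. y \<in> Z"
    and w: "w \<in> borel_measurable lam" "\<And>y. \<bar>w y\<bar> \<le> B" "(w \<longlongrightarrow> w x) (at x within Z)"
    and \<psi>: "\<forall>\<^sub>F \<epsilon> in F. integrable lam (\<lambda>y. (\<psi> \<epsilon> y)\<^sup>2) \<and> 0 < (\<integral>y. (\<psi> \<epsilon> y)\<^sup>2 \<partial>lam)"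
    and concentrated: "\<And>\<delta>. 0 < \<delta> \<Longrightarrow>
      ((\<lambda>\<epsilon>. (LINT y:{y. \<delta> < norm (y - x)}|lam. (\<psi> \<epsilon> y)\<^sup>2) / (\<integral>y. (\<psi> \<epsilon> y)\<^sup>2 \<partial>lam)) \<longlongrightarrow> 0) F"
  shows "((\<lambda>\<epsilon>. (\<integral>y. (\<psi> \<epsilon> y)\<^sup>2 * w y \<partial>lam) / (\<integral>y. (\<psi> \<epsilon> y)\<^sup>2 \<partial>lam)) \<longlongrightarrow> w x) F"
  unfolding tendsto_iff
proof (intro allI impI)
  fix e :: real assume "0 < e"
  then obtain \<delta> where \<delta>: "0 < \<delta>"
      "\<And>y. y \<in> Z \<Longrightarrow> \<bar>w y - w x\<bar> \<le> e / 2 + 2 * B * indicator {y. \<delta> < norm (y - x)} y"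
    using tendsto_within_deviation_bound[OF w(3,2), of "e / 2"] by auto
  define A where "A = {y. \<delta> < norm (y - x)}"
  have A_sets: "A \<in> sets lam"
    unfolding A_def lam(1) by (intro borel_open open_Collect_less continuous_intros)
  have dev: "AE y in lam. \<bar>w y - w x\<bar> \<le> e / 2 + 2 * B * indicator A y"
    using lam(2) by eventually_elim (simp add: \<delta>(2) A_def)
  have B: "0 \<le> B" using w(2)[of x] by linarith
  define T where "T \<epsilon> = (LINT y:A|lam. (\<psi> \<epsilon> y)\<^sup>2) / (\<integral>y. (\<psi> \<epsilon> y)\<^sup>2 \<partial>lam)" for \<epsilon>
  have "(T \<longlongrightarrow> 0) F"
    unfolding T_def A_def using \<delta>(1) by (rule concentrated)
  then have "\<forall>\<^sub>F \<epsilon> in F. \<bar>T \<epsilon>\<bar> < e / (4 * B + 1)"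
    using \<open>0 < e\<close> B by (auto simp: tendsto_iff dist_real_def)
  then have small_tail: "\<forall>\<^sub>F \<epsilon> in F. 2 * B * T \<epsilon> < e / 2"
  proof (rule eventually_mono)
    fix \<epsilon> assume "\<bar>T \<epsilon>\<bar> < e / (4 * B + 1)"
    then have "2 * B * T \<epsilon> \<le> 2 * B * (e / (4 * B + 1))" using B by (intro mult_left_mono) auto
    also have "\<dots> < e / 2" using B \<open>0 < e\<close> by (simp add: field_simps)
    finally show "2 * B * T \<epsilon> < e / 2" .
  qed
  show "\<forall>\<^sub>F \<epsilon> in F. dist ((\<integral>y. (\<psi> \<epsilon> y)\<^sup>2 * w y \<partial>lam) / (\<integral>y. (\<psi> \<epsilon> y)\<^sup>2 \<partial>lam)) (w x) < e"
    using \<psi> small_tail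
  proof eventually_elim
    case (elim \<epsilon>)
    then have "\<bar>(\<integral>y. (\<psi> \<epsilon> y)\<^sup>2 * w y \<partial>lam) / (\<integral>y. (\<psi> \<epsilon> y)\<^sup>2 \<partial>lam) - w x\<bar> \<le> e / 2 + 2 * B * T \<epsilon>"
      unfolding T_def using w(1,2) A_sets dev by (intro weighted_average_deviation) auto
    then show ?case using elim by (simp add: dist_real_def)
  qed
qed

section \<open>Measures with a density on a variety\<close>

lemma power2_L2norm: "(L2norm M u)\<^sup>2 = (\<integral>y. (u y)\<^sup>2 \<partial>M)"
  unfolding L2norm_def by (rule real_sqrt_pow2) (auto intro: integral_nonneg_AE)

lemma closed_real_alg_variety:
  assumes "real_alg_variety Z" shows "closed Z"
proof -
  obtain P where P: "finite P" "\<forall>p\<in>P. polynomial_fun p" "Z = (\<Inter>p\<in>P. {x. p x = 0})"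
    using assms by (auto simp: real_alg_variety_def)
  have "closed {x. p x = 0}" if "p \<in> P" for p
    using P(2) that by (intro closed_Collect_eq continuous_on_polynomial_fun continuous_on_const) auto
  then show ?thesis using P(3) by auto
qed

lemma Vd_iff: "p \<in> Vd d Z \<longleftrightarrow> (\<exists>q. poly_deg d q \<and> p = (\<lambda>y. if y \<in> Z then q y else 0))"
  unfolding Vd_def by blast

lemma Vd_eq_range_lincomb:
  "Vd d Z = range (\<lambda>c y. \<Sum>\<alpha>\<in>multi_indices d. c \<alpha> * (if y \<in> Z then monomial_fun \<alpha> y else 0))"
proof -
  have restrict: "(\<lambda>y. if y \<in> Z then \<Sum>\<alpha>\<in>multi_indices d. c \<alpha> * monomial_fun \<alpha> y else 0)
      = (\<lambda>y. \<Sum>\<alpha>\<in>multi_indices d. c \<alpha> * (if y \<in> Z then monomial_fun \<alpha> y else 0))" for c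
    by (auto simp: fun_eq_iff)
  show ?thesis
  proof (intro set_eqI iffI)
    fix p assume "p \<in> Vd d Z"
    then obtain c where "p = (\<lambda>y. if y \<in> Z then \<Sum>\<alpha>\<in>multi_indices d. c \<alpha> * monomial_fun \<alpha> y else 0)"
      unfolding Vd_iff poly_deg_iff by blast
    then show "p \<in> range (\<lambda>c y. \<Sum>\<alpha>\<in>multi_indices d. c \<alpha> * (if y \<in> Z then monomial_fun \<alpha> y else 0))"
      unfolding restrict by blast
  next
    fix p assume "p \<in> range (\<lambda>c y. \<Sum>\<alpha>\<in>multi_indices d. c \<alpha> * (if y \<in> Z then monomial_fun \<alpha> y else 0))"
    then obtain c where "p = (\<lambda>y. if y \<in> Z then \<Sum>\<alpha>\<in>multi_indices d. c \<alpha> * monomial_fun \<alpha> y else 0)"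
      unfolding restrict[symmetric] by blast
    then show "p \<in> Vd d Z" unfolding Vd_iff poly_deg_iff by blast
  qed
qed

locale variety_density =
  fixes Z X :: "(real^'n) set" and lam mu :: "(real^'n) measure" and f :: "real^'n \<Rightarrow> real"
  assumes closed_Z: "closed Z"
    and sets_lam: "sets lam = sets borel" and lam_outside_Z: "emeasure lam (UNIV - Z) = 0"
    and finite_mu: "finite_measure mu"
    and X_eq_support: "X = msupp mu" and compact_X: "compact X"
    and zariski_dense_X: "zariski_dense X Z"
    and continuous_f: "continuous_on X f" and f_pos: "\<forall>y\<in>X. f y > 0"
    and mu_eq_density: "mu = density lam (\<lambda>y. ennreal (f y) * indicator X y)"
begin

text \<open>Since \<open>inverse 0 = 0\<close>, \<open>inverse (dens y)\<close> is \<open>1 / f y\<close> on \<open>X\<close> and vanishes off \<open>X\<close>.\<close>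

definition dens :: "real^'n \<Rightarrow> real" where
  "dens y = indicator X y * f y"

lemma closed_X: "closed X"
  using compact_X by (rule compact_imp_closed)

lemma dens_measurable: "dens \<in> borel_measurable lam"
proof -
  have "(\<lambda>y. indicator X y *\<^sub>R f y) \<in> borel_measurable borel"
    using closed_X continuous_f by (intro borel_measurable_continuous_on_indicator) auto
  then show ?thesis by (simp add: dens_def[abs_def] measurable_cong_sets[OF sets_lam refl])
qed

lemma dens_nonneg: "0 \<le> dens y"
  using f_pos by (auto simp: dens_def indicator_def less_imp_le)

lemma mu_eq: "mu = density lam dens"
proof -
  have "(\<lambda>y. ennreal (f y) * indicator X y) = (\<lambda>y. ennreal (dens y))"
    by (auto simp: dens_def indicator_def)
  then show ?thesis using mu_eq_density by simp
qed

lemma sets_mu: "sets mu = sets borel"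
  by (simp add: mu_eq sets_lam)

lemma measurable_mu_iff: "g \<in> borel_measurable mu \<longleftrightarrow> g \<in> borel_measurable lam"
  by (simp add: measurable_cong_sets[OF sets_mu refl] measurable_cong_sets[OF sets_lam refl])

lemma AE_mu_iff: "(AE y in mu. P y) \<longleftrightarrow> (AE y in lam. 0 < dens y \<longrightarrow> P y)"
proof -
  have "(\<lambda>y. ennreal (dens y)) \<in> borel_measurable lam"
    using measurable_compose[OF dens_measurable measurable_ennreal] .
  then show ?thesis unfolding mu_eq by (subst AE_density) simp_all
qed

lemma AE_lam_Z: "AE y in lam. y \<in> Z"
proof -
  have "UNIV - Z \<in> sets lam" using closed_Z sets_lam by auto
  then show ?thesis
    using lam_outside_Z sets_eq_imp_space_eq[OF sets_lam] by (subst AE_iff_measurable) auto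
qed

lemma AE_mu_Z: "AE y in mu. y \<in> Z"
  using AE_lam_Z unfolding AE_mu_iff by eventually_elim simp

lemma AE_mu_X: "AE y in mu. y \<in> X"
  unfolding AE_mu_iff by (intro AE_I2) (auto simp: dens_def indicator_def)

lemma disjoint_support_if_null:
  assumes "open U" "AE y in mu. y \<notin> U" shows "U \<inter> X = {}"
proof -
  have "emeasure mu U = 0"
    using assms sets_mu sets_eq_imp_space_eq[OF sets_mu] by (subst (asm) AE_iff_measurable) auto
  then show ?thesis using assms(1) unfolding X_eq_support msupp_def by auto
qed

lemma X_subset_Z: "X \<subseteq> Z"
  using disjoint_support_if_null[of "- Z"] closed_Z AE_mu_Z by auto

lemma integral_mu: "u \<in> borel_measurable lam \<Longrightarrow> (\<integral>y. u y \<partial>mu) = (\<integral>y. dens y * u y \<partial>lam)"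
  unfolding mu_eq using dens_measurable dens_nonneg by (subst integral_density) auto

lemma integrable_mu:
  "u \<in> borel_measurable lam \<Longrightarrow> integrable mu u \<longleftrightarrow> integrable lam (\<lambda>y. dens y * u y)"
  unfolding mu_eq using dens_measurable dens_nonneg by (subst integrable_density) auto

lemma Vd_measurable:
  assumes "p \<in> Vd d Z" shows "p \<in> borel_measurable lam"
proof -
  obtain q where q: "poly_deg d q" "p = (\<lambda>y. if y \<in> Z then q y else 0)"
    using assms by (auto simp: Vd_iff)
  have "(\<lambda>y. indicator Z y *\<^sub>R q y) \<in> borel_measurable borel"
    using closed_Z continuous_on_poly_deg[OF q(1)] by (intro borel_measurable_continuous_on_indicator) auto
  moreover have "p = (\<lambda>y. indicator Z y *\<^sub>R q y)" using q(2) by (auto simp: indicator_def)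
  ultimately show ?thesis by (simp add: measurable_cong_sets[OF sets_lam refl])
qed

lemma Vd_square_integrable:
  assumes "p \<in> Vd d Z" shows "square_integrable mu p"
proof (rule square_integrable_continuous_on[OF finite_mu compact_X AE_mu_X])
  show "p \<in> borel_measurable mu" using Vd_measurable[OF assms] by (simp add: measurable_mu_iff)
  obtain q where q: "poly_deg d q" "p = (\<lambda>y. if y \<in> Z then q y else 0)"
    using assms by (auto simp: Vd_iff)
  have "continuous_on X p \<longleftrightarrow> continuous_on X q"
    using q(2) X_subset_Z by (intro continuous_on_cong) auto
  then show "continuous_on X p" using continuous_on_poly_deg[OF q(1)] by simp
qed

lemma Vd_diff:
  assumes "p \<in> Vd d Z" "p' \<in> Vd d Z" shows "(\<lambda>y. p y - p' y) \<in> Vd d Z"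
proof -
  obtain q q' where "poly_deg d q" "p = (\<lambda>y. if y \<in> Z then q y else 0)"
    and "poly_deg d q'" "p' = (\<lambda>y. if y \<in> Z then q' y else 0)"
    using assms by (auto simp: Vd_iff)
  moreover have "poly_deg d (\<lambda>y. q y + (-1) * q' y)" if "poly_deg d q" "poly_deg d q'"
    using that by (intro poly_deg_add poly_deg_scale)
  ultimately show ?thesis unfolding Vd_iff by (intro exI[of _ "\<lambda>y. q y + (-1) * q' y"]) auto
qed

lemma mono_Vd: "mono (\<lambda>d. Vd d Z)"
proof (intro monoI subsetI)
  fix d e p assume "d \<le> e" "p \<in> Vd d Z"
  then show "p \<in> Vd e Z" unfolding Vd_iff using poly_deg_mono by blast
qed

text \<open>Zariski density makes \<open>L2_inner mu\<close> definite on \<open>Vd d Z\<close>.\<close>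
lemma Vd_eq_0_if_AE:
  assumes "p \<in> Vd d Z" "AE y in mu. p y = 0" shows "p = (\<lambda>_. 0)"
proof -
  obtain q where q: "poly_deg d q" "p = (\<lambda>y. if y \<in> Z then q y else 0)"
    using assms by (auto simp: Vd_iff)
  have "open {y. q y \<noteq> 0}"
    using continuous_on_poly_deg[OF q(1)] by (intro open_Collect_neq continuous_on_const) auto
  moreover have "AE y in mu. y \<notin> {y. q y \<noteq> 0}"
    using assms(2) AE_mu_Z by eventually_elim (auto simp: q(2))
  ultimately have "\<forall>y\<in>X. q y = 0" using disjoint_support_if_null by blast
  moreover have "polynomial_fun q" using q(1) by (auto simp: polynomial_fun_def)
  ultimately have "\<forall>y\<in>Z. q y = 0" using zariski_dense_X unfolding zariski_dense_def by blast
  then show ?thesis by (auto simp: q(2) fun_eq_iff)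
qed

lemma Vd_projection_exists:
  assumes h: "square_integrable mu h"
  shows "\<exists>g\<in>Vd d Z. \<forall>p\<in>Vd d Z. L2_inner mu (\<lambda>y. h y - g y) p = 0"
proof -
  define b where "b \<alpha> y = (if y \<in> Z then monomial_fun \<alpha> y else 0)" for \<alpha> y
  have Vd_eq: "Vd d Z = range (\<lambda>c y. \<Sum>\<alpha>\<in>multi_indices d. c \<alpha> * b \<alpha> y)"
    unfolding Vd_eq_range_lincomb b_def ..
  have b_Vd: "b \<alpha> \<in> Vd d Z" if "\<alpha> \<in> multi_indices d" for \<alpha>
    unfolding Vd_iff b_def using that by (auto intro: poly_deg_monomial_fun simp: multi_indices_def)
  then have b: "square_integrable mu (b \<alpha>)" if "\<alpha> \<in> multi_indices d" for \<alpha>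
    using that Vd_square_integrable by blast
  obtain c where c: "\<forall>\<beta>\<in>multi_indices d. L2_inner mu (\<lambda>y. h y - (\<Sum>\<alpha>\<in>multi_indices d. c \<alpha> * b \<alpha> y)) (b \<beta>) = 0"
    using L2_projection_exists[where I = "multi_indices d" and b = b, OF finite_multi_indices b h] by blast
  define g where "g y = (\<Sum>\<alpha>\<in>multi_indices d. c \<alpha> * b \<alpha> y)" for y
  have g: "g \<in> Vd d Z" unfolding Vd_eq g_def by blast
  have hg: "square_integrable mu (\<lambda>y. h y - g y)"
    using h Vd_square_integrable[OF g] by (rule square_integrable_diff)
  have "L2_inner mu (\<lambda>y. h y - g y) p = 0" if "p \<in> Vd d Z" for p
  proof -
    obtain c' where p: "p = (\<lambda>y. \<Sum>\<alpha>\<in>multi_indices d. c' \<alpha> * b \<alpha> y)"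
      using \<open>p \<in> Vd d Z\<close> unfolding Vd_eq by blast
    have "L2_inner mu (\<lambda>y. h y - g y) p = (\<Sum>\<alpha>\<in>multi_indices d. c' \<alpha> * L2_inner mu (b \<alpha>) (\<lambda>y. h y - g y))"
      unfolding p by (subst L2_inner_commute) (rule L2_inner_lincomb_left[OF finite_multi_indices b hg])
    also have "\<dots> = 0" using c by (simp add: g_def L2_inner_commute)
    finally show ?thesis .
  qed
  with g show ?thesis by blast
qed

lemma Vd_dense:
  assumes h: "square_integrable mu h" and e: "0 < e"
  shows "\<exists>d. \<exists>p\<in>Vd d Z. (\<integral>y. (h y - p y)\<^sup>2 \<partial>mu) < e"
proof -
  obtain q where q: "polynomial_fun q" "(\<integral>y. (h y - q y)\<^sup>2 \<partial>mu) < e"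
    using polynomial_dense_L2[OF sets_mu finite_mu compact_X AE_mu_X h e] by blast
  obtain d where "poly_deg d q" using q(1) by (auto simp: polynomial_fun_def)
  define p where "p = (\<lambda>y. if y \<in> Z then q y else 0)"
  have p: "p \<in> Vd d Z" unfolding Vd_iff p_def using \<open>poly_deg d q\<close> by blast
  have "h \<in> borel_measurable mu" using h by (simp add: square_integrable_def)
  moreover have "p \<in> borel_measurable mu" using Vd_measurable[OF p] by (simp add: measurable_mu_iff)
  moreover have "q \<in> borel_measurable mu"
    using borel_measurable_continuous_onI[OF continuous_on_polynomial_fun[OF q(1)]]
    by (simp add: measurable_cong_sets[OF sets_mu refl])
  ultimately have "(\<integral>y. (h y - p y)\<^sup>2 \<partial>mu) = (\<integral>y. (h y - q y)\<^sup>2 \<partial>mu)"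
    using AE_mu_Z by (intro integral_cong_AE) (auto simp: p_def)
  then show ?thesis using p q(2) by (intro exI[of _ d] bexI[of _ p]) simp_all
qed

lemma inverse_dens_measurable: "(\<lambda>y. inverse (dens y)) \<in> borel_measurable lam"
  using dens_measurable by measurable

lemma inverse_dens_bounded: "\<exists>B. \<forall>y. \<bar>inverse (dens y)\<bar> \<le> B"
proof -
  have "continuous_on X (\<lambda>y. inverse (f y))"
    using continuous_f f_pos by (intro continuous_on_inverse) auto
  then have "bounded ((\<lambda>y. inverse (f y)) ` X)"
    using compact_X by (intro compact_imp_bounded compact_continuous_image)
  then obtain B where B: "0 < B" "\<And>y. y \<in> X \<Longrightarrow> \<bar>inverse (f y)\<bar> \<le> B"
    unfolding bounded_pos by auto
  then have "\<bar>inverse (dens y)\<bar> \<le> B" for y by (cases "y \<in> X") (auto simp: dens_def)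
  then show ?thesis by blast
qed

lemma inverse_dens_tendsto:
  assumes "x \<in> (top_of_set Z) interior_of X \<or> x \<notin> X"
  shows "((\<lambda>y. inverse (dens y)) \<longlongrightarrow> inverse (dens x)) (at x within Z)"
proof (cases "x \<in> X")
  case True
  with assms have "x \<in> (top_of_set Z) interior_of X" by blast
  then obtain U where U: "open U" "x \<in> U" "Z \<inter> U \<subseteq> X"
    unfolding interior_of_def openin_open by blast
  have "continuous_on X (\<lambda>y. inverse (dens y)) \<longleftrightarrow> continuous_on X (\<lambda>y. inverse (f y))"
    by (intro continuous_on_cong) (auto simp: dens_def)
  moreover have "continuous_on X (\<lambda>y. inverse (f y))"
    using continuous_f f_pos by (intro continuous_on_inverse) auto
  ultimately have "((\<lambda>y. inverse (dens y)) \<longlongrightarrow> inverse (dens x)) (at x within X)"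
    using True unfolding continuous_on_def by blast
  moreover have "\<forall>\<^sub>F y in at x. y \<in> X \<longleftrightarrow> y \<in> Z"
    unfolding eventually_at_topological
  proof (intro exI[of _ U] conjI ballI impI)
    fix y assume "y \<in> U"
    then show "y \<in> X \<longleftrightarrow> y \<in> Z" using U(3) X_subset_Z by blast
  qed (use U in auto)
  ultimately show ?thesis by (rule Lim_transform_within_set)
next
  case False
  have "\<forall>\<^sub>F y in at x within Z. inverse (dens y) = inverse (dens x)"
    unfolding eventually_at_topological
  proof (intro exI[of _ "- X"] conjI ballI impI)
    fix y assume "y \<in> - X"
    then show "inverse (dens y) = inverse (dens x)" using False by (simp add: dens_def)
  qed (use closed_X False in \<open>auto simp: open_Compl\<close>)
  then show ?thesis by (rule tendsto_eventually)
qed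

lemma weighted_square_integrable:
  assumes "\<psi> \<in> borel_measurable lam" "integrable lam (\<lambda>y. (\<psi> y)\<^sup>2)"
  shows "square_integrable mu (\<lambda>y. \<psi> y * inverse (dens y))"
    and "(\<integral>y. (\<psi> y * inverse (dens y))\<^sup>2 \<partial>mu) = (\<integral>y. (\<psi> y)\<^sup>2 * inverse (dens y) \<partial>lam)"
proof -
  have meas: "(\<lambda>y. \<psi> y * inverse (dens y)) \<in> borel_measurable lam"
    using assms(1) inverse_dens_measurable by measurable
  have eq: "dens y * (\<psi> y * inverse (dens y))\<^sup>2 = (\<psi> y)\<^sup>2 * inverse (dens y)" for y
    by (cases "dens y = 0") (simp_all add: power2_eq_square field_simps)
  obtain B where "\<And>y. \<bar>inverse (dens y)\<bar> \<le> B" using inverse_dens_bounded by blast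
  then have "integrable lam (\<lambda>y. (\<psi> y)\<^sup>2 * inverse (dens y))"
    using assms(2) inverse_dens_measurable by (intro integrable_mult_bounded)
  then show "square_integrable mu (\<lambda>y. \<psi> y * inverse (dens y))"
    using meas by (simp add: square_integrable_def measurable_mu_iff integrable_mu eq)
  show "(\<integral>y. (\<psi> y * inverse (dens y))\<^sup>2 \<partial>mu) = (\<integral>y. (\<psi> y)\<^sup>2 * inverse (dens y) \<partial>lam)"
    using meas by (simp add: integral_mu eq)
qed

lemma set_integral_lam_eq_L2_inner:
  assumes "\<psi> \<in> borel_measurable lam" "p \<in> borel_measurable lam"
  shows "(LINT y:X|lam. \<psi> y * p y) = L2_inner mu (\<lambda>y. \<psi> y * inverse (dens y)) p"
proof -
  have "L2_inner mu (\<lambda>y. \<psi> y * inverse (dens y)) p = (\<integral>y. dens y * (\<psi> y * inverse (dens y) * p y) \<partial>lam)"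
    unfolding L2_inner_def using assms inverse_dens_measurable by (intro integral_mu) measurable
  also have "\<dots> = (\<integral>y. indicator X y * (\<psi> y * p y) \<partial>lam)"
    using f_pos by (intro Bochner_Integration.integral_cong) (auto simp: dens_def indicator_def)
  finally show ?thesis by (simp add: set_lebesgue_integral_def)
qed

lemma set_integral_mu_eq_L2_inner:
  assumes "g \<in> borel_measurable mu" "p \<in> borel_measurable mu"
  shows "(LINT y:X|mu. g y * p y) = L2_inner mu g p"
proof -
  have "X \<in> sets mu" using closed_X sets_mu by simp
  then have "(\<lambda>y. indicator X y * (g y * p y)) \<in> borel_measurable mu" using assms by measurable
  then show ?thesis
    unfolding set_lebesgue_integral_def L2_inner_def
    using assms AE_mu_X by (intro integral_cong_AE) auto
qed

end

lemma L2_mollifiersD: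
  assumes "L2_mollifiers Z lam E \<phi>" "z \<in> Z" "\<epsilon> \<in> E"
  shows "\<phi> z \<epsilon> \<in> borel_measurable lam" "integrable lam (\<lambda>y. (\<phi> z \<epsilon> y)\<^sup>2)"
    and "0 < (\<integral>y. (\<phi> z \<epsilon> y)\<^sup>2 \<partial>lam)"
proof -
  from assms(1) have "\<forall>z\<in>Z. \<forall>\<epsilon>\<in>E. (\<forall>y\<in>Z. \<phi> z \<epsilon> y \<ge> 0) \<and> \<phi> z \<epsilon> \<in> borel_measurable lam \<and>
      integrable lam (\<phi> z \<epsilon>) \<and> (\<integral>y. \<phi> z \<epsilon> y \<partial>lam) = 1 \<and> integrable lam (\<lambda>y. (\<phi> z \<epsilon> y)\<^sup>2)"
    and "\<forall>\<epsilon>\<in>E. \<exists>c C. 0 < c \<and> c < C \<and> (\<forall>z\<in>Z. c < L2norm lam (\<phi> z \<epsilon>) \<and> L2norm lam (\<phi> z \<epsilon>) < C)"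
    unfolding L2_mollifiers_def by blast+
  with assms(2,3) obtain c where "\<phi> z \<epsilon> \<in> borel_measurable lam" "integrable lam (\<lambda>y. (\<phi> z \<epsilon> y)\<^sup>2)"
      "0 < c" "c < L2norm lam (\<phi> z \<epsilon>)"
    by blast
  then show "\<phi> z \<epsilon> \<in> borel_measurable lam" "integrable lam (\<lambda>y. (\<phi> z \<epsilon> y)\<^sup>2)"
    and "0 < (\<integral>y. (\<phi> z \<epsilon> y)\<^sup>2 \<partial>lam)"
    unfolding power2_L2norm[symmetric] by simp_all
qed

lemma L2_mollifiers_concentrated:
  assumes "L2_mollifiers Z lam E \<phi>" "z \<in> Z" "0 < \<delta>"
  shows "((\<lambda>\<epsilon>. (LINT y:{y. \<delta> < norm (y - z)}|lam. (\<phi> z \<epsilon> y)\<^sup>2) / (\<integral>y. (\<phi> z \<epsilon> y)\<^sup>2 \<partial>lam))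
      \<longlongrightarrow> 0) (at 0 within E)"
proof -
  from assms(1) have "\<forall>\<delta>>0. \<forall>z\<in>Z. ((\<lambda>\<epsilon>. (LINT y:{y. norm (y - z) > \<delta>}|lam. (\<phi> z \<epsilon> y)\<^sup>2) /
      (L2norm lam (\<phi> z \<epsilon>))\<^sup>2) \<longlongrightarrow> 0) (at 0 within E)"
    unfolding L2_mollifiers_def by blast
  then show ?thesis using assms(2,3) unfolding power2_L2norm by blast
qed

context variety_density
begin

lemma Vd_projection_unique:
  assumes "square_integrable mu h"
    and "g1 \<in> Vd d Z" "\<forall>p\<in>Vd d Z. L2_inner mu (\<lambda>y. h y - g1 y) p = 0"
    and "g2 \<in> Vd d Z" "\<forall>p\<in>Vd d Z. L2_inner mu (\<lambda>y. h y - g2 y) p = 0"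
  shows "g1 = g2"
proof (rule L2_projection_unique[where W = "Vd d Z"])
  show "\<And>p. p \<in> Vd d Z \<Longrightarrow> square_integrable mu p" by (rule Vd_square_integrable)
  show "\<And>p q. p \<in> Vd d Z \<Longrightarrow> q \<in> Vd d Z \<Longrightarrow> (\<lambda>x. p x - q x) \<in> Vd d Z" by (rule Vd_diff)
  show "\<And>p. p \<in> Vd d Z \<Longrightarrow> AE x in mu. p x = 0 \<Longrightarrow> p = (\<lambda>_. 0)" by (rule Vd_eq_0_if_AE)
qed (fact assms)+

lemma set_integral_eq_iff_orthogonal:
  assumes "\<psi> \<in> borel_measurable lam" "integrable lam (\<lambda>y. (\<psi> y)\<^sup>2)"
    and g: "g \<in> Vd d Z" and p: "p \<in> Vd d Z"
  shows "(LINT y:X|lam. \<psi> y * p y) = (LINT y:X|mu. g y * p y)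
    \<longleftrightarrow> L2_inner mu (\<lambda>y. \<psi> y * inverse (dens y) - g y) p = 0"
proof -
  have "(LINT y:X|lam. \<psi> y * p y) = L2_inner mu (\<lambda>y. \<psi> y * inverse (dens y)) p"
    by (rule set_integral_lam_eq_L2_inner[OF assms(1) Vd_measurable[OF p]])
  moreover have "(LINT y:X|mu. g y * p y) = L2_inner mu g p"
    using Vd_measurable[OF g] Vd_measurable[OF p]
    by (intro set_integral_mu_eq_L2_inner) (simp_all add: measurable_mu_iff)
  moreover have "L2_inner mu (\<lambda>y. \<psi> y * inverse (dens y) - g y) p
      = L2_inner mu (\<lambda>y. \<psi> y * inverse (dens y)) p - L2_inner mu g p"
    using weighted_square_integrable(1)[OF assms(1,2)] Vd_square_integrable[OF g] Vd_square_integrable[OF p]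
    by (rule L2_inner_diff_left)
  ultimately show ?thesis by simp
qed

lemma dens_rep_orthogonal:
  assumes "\<phi> x \<epsilon> \<in> borel_measurable lam" "integrable lam (\<lambda>y. (\<phi> x \<epsilon> y)\<^sup>2)"
  shows "dens_rep Z X lam mu \<phi> d \<epsilon> x \<in> Vd d Z"
    and "p \<in> Vd d Z \<Longrightarrow>
      L2_inner mu (\<lambda>y. \<phi> x \<epsilon> y * inverse (dens y) - dens_rep Z X lam mu \<phi> d \<epsilon> x y) p = 0"
proof -
  define h where "h = (\<lambda>y. \<phi> x \<epsilon> y * inverse (dens y))"
  define represents where "represents g \<longleftrightarrow> g \<in> Vd d Z \<and>
    (\<forall>p\<in>Vd d Z. (LINT y:X|lam. \<phi> x \<epsilon> y * p y) = (LINT y:X|mu. g y * p y))" for g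
  have represents_iff: "represents g \<longleftrightarrow> g \<in> Vd d Z \<and> (\<forall>p\<in>Vd d Z. L2_inner mu (\<lambda>y. h y - g y) p = 0)" for g
    unfolding represents_def h_def using set_integral_eq_iff_orthogonal[OF assms] by blast
  have h: "square_integrable mu h"
    unfolding h_def using assms by (rule weighted_square_integrable)
  obtain g where "represents g"
    using Vd_projection_exists[OF h] unfolding represents_iff by blast
  moreover have "g' = g" if "represents g'" for g'
    using that \<open>represents g\<close> Vd_projection_unique[OF h] unfolding represents_iff by blast
  ultimately have "represents (dens_rep Z X lam mu \<phi> d \<epsilon> x)"
    unfolding dens_rep_def represents_def[symmetric] by (rule theI)
  then show "dens_rep Z X lam mu \<phi> d \<epsilon> x \<in> Vd d Z"
    and "p \<in> Vd d Z \<Longrightarrow>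
      L2_inner mu (\<lambda>y. \<phi> x \<epsilon> y * inverse (dens y) - dens_rep Z X lam mu \<phi> d \<epsilon> x y) p = 0"
    unfolding represents_iff h_def by blast+
qed

lemma DMCD_tendsto:
  assumes "\<phi> x \<epsilon> \<in> borel_measurable lam" "integrable lam (\<lambda>y. (\<phi> x \<epsilon> y)\<^sup>2)"
  shows "(\<lambda>d. DMCD Z X lam mu \<phi> d \<epsilon> x x) \<longlonglongrightarrow> (\<integral>y. (\<phi> x \<epsilon> y)\<^sup>2 * inverse (dens y) \<partial>lam)"
proof -
  define h where "h = (\<lambda>y. \<phi> x \<epsilon> y * inverse (dens y))"
  define G where "G d = dens_rep Z X lam mu \<phi> d \<epsilon> x" for d
  have h: "square_integrable mu h" unfolding h_def using assms by (rule weighted_square_integrable)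
  have G: "G d \<in> Vd d Z" "\<And>p. p \<in> Vd d Z \<Longrightarrow> L2_inner mu (\<lambda>y. h y - G d y) p = 0" for d
    unfolding h_def G_def by (rule dens_rep_orthogonal[where \<phi> = \<phi> and x = x and \<epsilon> = \<epsilon>, OF assms])+
  have "(\<lambda>d. \<integral>y. (G d y)\<^sup>2 \<partial>mu) \<longlonglongrightarrow> (\<integral>y. (h y)\<^sup>2 \<partial>mu)"
  proof (rule L2_projection_norm_tendsto[where W = "\<lambda>d. Vd d Z"])
    show "\<And>d p. p \<in> Vd d Z \<Longrightarrow> square_integrable mu p" by (rule Vd_square_integrable)
    show "\<And>d p q. p \<in> Vd d Z \<Longrightarrow> q \<in> Vd d Z \<Longrightarrow> (\<lambda>x. p x - q x) \<in> Vd d Z" by (rule Vd_diff)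
    show "\<And>e. 0 < e \<Longrightarrow> \<exists>d. \<exists>q\<in>Vd d Z. (\<integral>y. (h y - q y)\<^sup>2 \<partial>mu) < e" by (rule Vd_dense[OF h])
  qed (fact mono_Vd h G)+
  moreover have "(\<integral>y. (h y)\<^sup>2 \<partial>mu) = (\<integral>y. (\<phi> x \<epsilon> y)\<^sup>2 * inverse (dens y) \<partial>lam)"
    unfolding h_def using assms by (rule weighted_square_integrable)
  ultimately show ?thesis by (simp add: DMCD_def G_def power2_eq_square)
qed

end

theorem theorem3p3:
  fixes Z X :: "(real^'n) set" and lam mu :: "(real^'n) measure" and E :: "real set"
    and \<phi> :: "real^'n \<Rightarrow> real \<Rightarrow> real^'n \<Rightarrow> real" and f :: "real^'n \<Rightarrow> real" and x :: "real^'n"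
  assumes "real_alg_variety Z"
    and "sets lam = sets borel" and "emeasure lam (UNIV - Z) = 0"
    and "L2_mollifiers Z lam E \<phi>"
    and "finite_measure mu"
    and "X = msupp mu" and "compact X"
    and "(top_of_set Z) interior_of X \<noteq> {}"
    and "zariski_dense X Z"
    and "continuous_on X f" and "\<forall>y\<in>X. f y > 0"
    and "mu = density lam (\<lambda>y. ennreal (f y) * indicator X y)"
    and "x \<in> Z" and "x \<in> (top_of_set Z) interior_of X \<or> x \<notin> X"
  shows "\<exists>L. (\<forall>\<epsilon>\<in>E. (\<lambda>d. DMCD Z X lam mu \<phi> d \<epsilon> x x / (L2norm lam (\<phi> x \<epsilon>))^2) \<longlonglongrightarrow> L \<epsilon>) \<and>
             (L \<longlongrightarrow> (if x \<in> (top_of_set Z) interior_of X then 1 / f x else 0)) (at 0 within E)"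
proof -
  interpret variety_density Z X lam mu f
    by (rule variety_density.intro[OF closed_real_alg_variety[OF assms(1)] assms(2,3,5,6,7,9-12)])
  obtain B where B: "\<And>y. \<bar>inverse (dens y)\<bar> \<le> B" using inverse_dens_bounded by blast
  define L where "L \<epsilon> = (\<integral>y. (\<phi> x \<epsilon> y)\<^sup>2 * inverse (dens y) \<partial>lam) / (\<integral>y. (\<phi> x \<epsilon> y)\<^sup>2 \<partial>lam)" for \<epsilon>
  have "(\<lambda>d. DMCD Z X lam mu \<phi> d \<epsilon> x x / (L2norm lam (\<phi> x \<epsilon>))\<^sup>2) \<longlonglongrightarrow> L \<epsilon>" if "\<epsilon> \<in> E" for \<epsilon>
    unfolding L_def power2_L2norm
    using L2_mollifiersD[OF assms(4,13) that]
    by (intro tendsto_divide tendsto_const DMCD_tendsto) auto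
  moreover have "(L \<longlongrightarrow> inverse (dens x)) (at 0 within E)"
    unfolding L_def using L2_mollifiersD(2,3)[OF assms(4,13)] L2_mollifiers_concentrated[OF assms(4,13)]
    by (intro weighted_concentration_tendsto[OF sets_lam AE_lam_Z inverse_dens_measurable B
          inverse_dens_tendsto[OF assms(14)]]) (auto simp: eventually_at_filter)
  moreover have "inverse (dens x) = (if x \<in> (top_of_set Z) interior_of X then 1 / f x else 0)"
    using assms(14) interior_of_subset[of "top_of_set Z" X] by (auto simp: dens_def inverse_eq_divide)
  ultimately show ?thesis by (intro exI[of _ L]) auto
qed

end
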